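(* Consider the multi-sender unicast index-coding instance with $N=4$ messages and $K=15$ senders, one for each nonempty subset of $[1:4]$ (i.e., the sender sets $\mathcal S_k$ range over all $15$ nonempty subsets of $\{1,2,3,4\}$), each with link capacity $C_k=1$, and receiver side information $\mathcal A_1=\{4\}$, $\mathcal A_2=\{3,4\}$, $\mathcal A_3=\{1,2\}$, $\mathcal A_4=\{2,3\}$. Its capacity region is $$\mathcal C=\left\{(R_1,\dots,R_4)\in\mathbb R_+^4:\begin{array}{l}R_j\le 8\ (j=1,2,3,4),\\ R_1+R_2\le12,\ R_1+R_3\le12,\ R_1+R_4\le12,\ R_3+R_4\le12,\\ R_1+R_2+R_3\le18\end{array}\right\}.$$
   Context: Model. $N$ independent messages $M_1,\dots,M_N$, $M_j$ uniform on $[1:2^{nR_j}]$ ($n$ the block length). Sender $k$ knows the messages $M_i$, $i\in\mathcal S_k$, and sends an index $L_k=f_k((M_i)_{i\in\mathcal S_k})\in[1:2^{nC_k})=\{1,\dots,2^{\lfloor nC_k\rfloor}\}$ over a noiseless broadcast link reaching all receivers. Receiver $j$ knows $M_i$, $i\in\mathcal A_j$, and must output an estimate $\hat M_j=g_j(L_1,\dots,L_K,(M_i)_{i\in\mathcal A_j})$ of $M_j$. A rate tuple is achievable if there exist such codes with $\Pr[(\hat M_1,\dots,\hat M_N)\ne(M_1,\dots,M_N)]\to0$ as $n\to\infty$; the capacity region $\mathcal C$ is the closure of the set of achievable rate tuples. *)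

theory Defs
  imports "HOL-Analysis.Analysis"
begin

text \<open>Senders are indexed by elements k of a
  set K :: 'k set; sender k knows the messages in S k and has link capacity C k;
  receiver j knows the messages in A j.\<close>

definition msg_set :: "nat \<Rightarrow> real^'n \<Rightarrow> 'n \<Rightarrow> nat set" where
  "msg_set n R j = {1 .. 2 ^ nat \<lceil>real n * R $ j\<rceil>}"

text \<open>All message tuples (the messages are independent and uniform on this product set).\<close>
definition msg_tuples :: "nat \<Rightarrow> real^'n \<Rightarrow> ('n \<Rightarrow> nat) set" where
  "msg_tuples n R = PiE UNIV (msg_set n R)"

definition link_set :: "nat \<Rightarrow> real \<Rightarrow> nat set" where
  "link_set n c = {1 .. 2 ^ nat \<lfloor>real n * c\<rfloor>}"

definition sent :: "'k set \<Rightarrow> ('k \<Rightarrow> 'n set) \<Rightarrow> ('k \<Rightarrow> ('n \<Rightarrow> nat) \<Rightarrow> nat)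
    \<Rightarrow> ('n \<Rightarrow> nat) \<Rightarrow> ('k \<Rightarrow> nat)" where
  "sent K S f m = (\<lambda>k\<in>K. f k (restrict m (S k)))"

definition valid_encoders :: "nat \<Rightarrow> real^'n \<Rightarrow> 'k set \<Rightarrow> ('k \<Rightarrow> 'n set) \<Rightarrow> ('k \<Rightarrow> real)
    \<Rightarrow> ('k \<Rightarrow> ('n \<Rightarrow> nat) \<Rightarrow> nat) \<Rightarrow> bool" where
  "valid_encoders n R K S C f \<longleftrightarrow>
     (\<forall>k\<in>K. \<forall>m\<in>msg_tuples n R. f k (restrict m (S k)) \<in> link_set n (C k))"

definition error_prob :: "nat \<Rightarrow> real^'n \<Rightarrow> 'k set \<Rightarrow> ('k \<Rightarrow> 'n set) \<Rightarrow> ('n \<Rightarrow> 'n set)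
    \<Rightarrow> ('k \<Rightarrow> ('n \<Rightarrow> nat) \<Rightarrow> nat) \<Rightarrow> ('n \<Rightarrow> ('k \<Rightarrow> nat) \<Rightarrow> ('n \<Rightarrow> nat) \<Rightarrow> nat) \<Rightarrow> real" where
  "error_prob n R K S A f g =
     real (card {m \<in> msg_tuples n R. \<exists>j. g j (sent K S f m) (restrict m (A j)) \<noteq> m j})
     / real (card (msg_tuples n R))"

definition achievable :: "'k set \<Rightarrow> ('k \<Rightarrow> 'n set) \<Rightarrow> ('k \<Rightarrow> real) \<Rightarrow> ('n \<Rightarrow> 'n set)
    \<Rightarrow> real^'n \<Rightarrow> bool" where
  "achievable K S C A R \<longleftrightarrow> (\<forall>j. 0 \<le> R $ j) \<and>
     (\<exists>F G. (\<forall>n. valid_encoders n R K S C (F n)) \<and>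
            (\<lambda>n. error_prob n R K S A (F n) (G n)) \<longlonglongrightarrow> 0)"

definition capacity_region :: "'k set \<Rightarrow> ('k \<Rightarrow> 'n set) \<Rightarrow> ('k \<Rightarrow> real) \<Rightarrow> ('n \<Rightarrow> 'n set)
    \<Rightarrow> (real^'n) set" where
  "capacity_region K S C A = closure {R. achievable K S C A R}"

end

(*
  Achievability: six explicit linear codes over \<int>/2^t, each carrying one symbol per link and
  decodable by peeling, realise six vertices of the polytope (one link use per symbol).  Running
  them side by side with symbols of \<lfloor>\<theta>_v n\<rfloor> bits reaches every rate tuple strictly below
  \<Sum>_v \<theta>_v (vertex v), and every point of the polytope is dominated by such a convex combination.

  Converse: once the error probability is below 1/2, at least half of the message tuples are
  decoded correctly; under the uniform distribution on them entropy is submodular, every index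
  is a function of its sender's messages, and every message is a function of its receiver's side
  information and all indices.  This gives the cut-set bounds R_j \<le> 8 and the four pair
  bounds \<le> 12, while R_1 + R_2 + R_3 \<le> 18 adds two decoding orders coupled by submodularity.
*)

theory Submission
  imports Defs
begin

section \<open>Zero-error codes and time sharing\<close>

definition zero_error_code :: "'k set \<Rightarrow> ('k \<Rightarrow> 'n set) \<Rightarrow> ('n \<Rightarrow> 'n set) \<Rightarrow> ('n \<Rightarrow> 'a set)
    \<Rightarrow> 'b set \<Rightarrow> ('k \<Rightarrow> ('n \<Rightarrow> 'a) \<Rightarrow> 'b) \<Rightarrow> ('n \<Rightarrow> ('k \<Rightarrow> 'b) \<Rightarrow> ('n \<Rightarrow> 'a) \<Rightarrow> 'a) \<Rightarrow> bool"
  where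
  "zero_error_code K S A M L enc dec \<longleftrightarrow> (\<forall>m. (\<forall>j. m j \<in> M j) \<longrightarrow>
     (\<forall>k\<in>K. enc k (restrict m (S k)) \<in> L) \<and>
     (\<forall>j. dec j (\<lambda>k\<in>K. enc k (restrict m (S k))) (restrict m (A j)) = m j))"

lemma zero_error_code_PiE:
  assumes "\<And>v. v \<in> V \<Longrightarrow> zero_error_code K S A (M v) (L v) (enc v) (dec v)"
  shows "zero_error_code K S A (\<lambda>j. \<Pi>\<^sub>E v\<in>V. M v j) (\<Pi>\<^sub>E v\<in>V. L v)
     (\<lambda>k m. \<lambda>v\<in>V. enc v k (\<lambda>i\<in>S k. m i v))
     (\<lambda>j l y. \<lambda>v\<in>V. dec v j (\<lambda>k\<in>K. l k v) (\<lambda>i\<in>A j. y i v))"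
  unfolding zero_error_code_def
proof (intro allI impI conjI ballI)
  fix m assume m: "\<forall>j. m j \<in> (\<Pi>\<^sub>E v\<in>V. M v j)"
  define mv where "mv v i = m i v" for v i
  have restrict_mv: "(\<lambda>i\<in>T. restrict m T i v) = restrict (mv v) T" for T v
    by (auto simp: mv_def)
  have code: "(\<forall>k\<in>K. enc v k (restrict (mv v) (S k)) \<in> L v) \<and>
      (\<forall>j. dec v j (\<lambda>k\<in>K. enc v k (restrict (mv v) (S k))) (restrict (mv v) (A j)) = mv v j)"
    if "v \<in> V" for v
    using assms[OF that] m that unfolding zero_error_code_def by (auto simp: mv_def PiE_iff)
  show "(\<lambda>v\<in>V. enc v k (\<lambda>i\<in>S k. restrict m (S k) i v)) \<in> (\<Pi>\<^sub>E v\<in>V. L v)" if "k \<in> K" for k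
    unfolding restrict_mv using code that by auto
  show "(\<lambda>v\<in>V. dec v j (\<lambda>k\<in>K. (\<lambda>k\<in>K. \<lambda>v\<in>V. enc v k (\<lambda>i\<in>S k. restrict m (S k) i v)) k v)
          (\<lambda>i\<in>A j. restrict m (A j) i v)) = m j" for j
  proof
    fix v show "(\<lambda>v\<in>V. dec v j (\<lambda>k\<in>K. (\<lambda>k\<in>K. \<lambda>v\<in>V. enc v k (\<lambda>i\<in>S k. restrict m (S k) i v)) k v)
          (\<lambda>i\<in>A j. restrict m (A j) i v)) v = m j v"
    proof (cases "v \<in> V")
      case True
      have links: "(\<lambda>k\<in>K. (\<lambda>k\<in>K. \<lambda>v\<in>V. enc v k (restrict (mv v) (S k))) k v)
          = (\<lambda>k\<in>K. enc v k (restrict (mv v) (S k)))"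
        using True by (intro restrict_ext) simp
      have "(\<lambda>v\<in>V. dec v j (\<lambda>k\<in>K. (\<lambda>k\<in>K. \<lambda>v\<in>V. enc v k (\<lambda>i\<in>S k. restrict m (S k) i v)) k v)
          (\<lambda>i\<in>A j. restrict m (A j) i v)) v
          = dec v j (\<lambda>k\<in>K. enc v k (restrict (mv v) (S k))) (restrict (mv v) (A j))"
        by (simp only: restrict_apply'[OF True] restrict_mv links)
      also have "\<dots> = m j v" using code[OF True] by (simp add: mv_def)
      finally show ?thesis .
    next
      case False
      then show ?thesis using m by (auto simp: PiE_iff extensional_def)
    qed
  qed
qed

lemma zero_error_code_embed:
  fixes R :: "real^'n" and M :: "'n \<Rightarrow> 'a set" and L :: "'b set" and K :: "'k set"
  assumes code: "zero_error_code K S A M L enc dec" and "\<And>j. finite (M j)" "finite L"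
    and M_large: "\<And>j. card (msg_set n R j) \<le> card (M j)"
    and L_small: "\<And>k. k \<in> K \<Longrightarrow> card L \<le> card (link_set n (C k))"
  shows "\<exists>f g. valid_encoders n R K S C f \<and> error_prob n R K S A f g = 0"
proof -
  have "\<exists>\<iota>. \<iota> ` msg_set n R j \<subseteq> M j \<and> inj_on \<iota> (msg_set n R j)" for j
    using card_le_inj[OF _ assms(2) M_large] by (simp add: msg_set_def)
  then obtain \<iota> where \<iota>: "\<And>j. \<iota> j ` msg_set n R j \<subseteq> M j" "\<And>j. inj_on (\<iota> j) (msg_set n R j)"
    by metis
  have "\<exists>\<kappa>. k \<in> K \<longrightarrow> \<kappa> ` L \<subseteq> link_set n (C k) \<and> inj_on \<kappa> L" for k
    using card_le_inj[OF assms(3), of "link_set n (C k)"] L_small by (auto simp: link_set_def)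
  then obtain \<kappa> where \<kappa>: "\<And>k. k \<in> K \<Longrightarrow> \<kappa> k ` L \<subseteq> link_set n (C k)" "\<And>k. k \<in> K \<Longrightarrow> inj_on (\<kappa> k) L"
    by metis
  define f where "f k m = \<kappa> k (enc k (\<lambda>i\<in>S k. \<iota> i (m i)))" for k m
  define g where "g j l y = the_inv_into (msg_set n R j) (\<iota> j)
      (dec j (\<lambda>k\<in>K. the_inv_into L (\<kappa> k) (l k)) (\<lambda>i\<in>A j. \<iota> i (y i)))" for j l y
  have correct: "(\<forall>k\<in>K. f k (restrict m (S k)) \<in> link_set n (C k)) \<and>
      (\<forall>j. g j (sent K S f m) (restrict m (A j)) = m j)" if m: "m \<in> msg_tuples n R" for m
  proof -
    define m' where "m' i = \<iota> i (m i)" for i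
    have mi: "m i \<in> msg_set n R i" for i using m by (auto simp: msg_tuples_def PiE_iff)
    then have "\<forall>j. m' j \<in> M j" using \<iota>(1) by (auto simp: m'_def)
    then have enc: "\<forall>k\<in>K. enc k (restrict m' (S k)) \<in> L"
      and dec: "\<forall>j. dec j (\<lambda>k\<in>K. enc k (restrict m' (S k))) (restrict m' (A j)) = m' j"
      using code unfolding zero_error_code_def by blast+
    have restrict_m': "(\<lambda>i\<in>T. \<iota> i (restrict m T i)) = restrict m' T" for T
      by (auto simp: m'_def)
    have f: "f k (restrict m (S k)) = \<kappa> k (enc k (restrict m' (S k)))" for k
      by (simp only: f_def restrict_m')
    have links: "(\<lambda>k\<in>K. the_inv_into L (\<kappa> k) (sent K S f m k)) = (\<lambda>k\<in>K. enc k (restrict m' (S k)))"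
      using enc \<kappa>(2) by (auto simp: sent_def f the_inv_into_f_f)
    have "g j (sent K S f m) (restrict m (A j)) = the_inv_into (msg_set n R j) (\<iota> j) (m' j)" for j
      unfolding g_def restrict_m' links using dec by simp
    then have "g j (sent K S f m) (restrict m (A j)) = m j" for j
      using \<iota>(2) mi by (simp add: m'_def the_inv_into_f_f)
    then show ?thesis using f enc \<kappa>(1) by blast
  qed
  have no_errors: "{m \<in> msg_tuples n R. \<exists>j. g j (sent K S f m) (restrict m (A j)) \<noteq> m j} = {}"
    using correct by blast
  have "error_prob n R K S A f g = 0"
    unfolding error_prob_def no_errors by simp
  moreover have "valid_encoders n R K S C f"
    using correct by (simp add: valid_encoders_def)
  ultimately show ?thesis by blast
qed

lemma achievable_if_eventually_error_free:
  fixes R :: "real^'n" and K :: "'k set"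
  assumes "\<forall>j. 0 \<le> R $ j"
    and "\<forall>\<^sub>F n in sequentially. \<exists>f g. valid_encoders n R K S C f \<and> error_prob n R K S A f g = 0"
  shows "achievable K S C A R"
proof -
  obtain N where N: "\<And>n. n \<ge> N \<Longrightarrow> \<exists>f g. valid_encoders n R K S C f \<and> error_prob n R K S A f g = 0"
    using assms(2) by (auto simp: eventually_sequentially)
  \<comment> \<open>below \<open>N\<close> any encoders will do, e.g. the constant index 1\<close>
  have "\<exists>f g. valid_encoders n R K S C f \<and> (n \<ge> N \<longrightarrow> error_prob n R K S A f g = 0)" for n
    using N[of n] by (cases "n \<ge> N") (auto simp: valid_encoders_def link_set_def intro!: exI[of _ "\<lambda>_ _. 1"])
  then obtain F G where FG: "\<And>n. valid_encoders n R K S C (F n)"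
      "\<And>n. n \<ge> N \<Longrightarrow> error_prob n R K S A (F n) (G n) = 0"
    by metis
  have "(\<lambda>n. error_prob n R K S A (F n) (G n)) \<longlonglongrightarrow> 0"
    by (rule tendsto_eventually) (use FG(2) in \<open>auto simp: eventually_sequentially\<close>)
  then show ?thesis using assms(1) FG(1) unfolding achievable_def by blast
qed

lemma card_symbol_vectors: "card (\<Pi>\<^sub>E i\<in>{..<w}. {0..<(2::int) ^ t}) = 2 ^ (t * w)"
  by (simp add: card_PiE nat_power_eq power_mult)

lemma eventually_le_floor_sum:
  fixes \<theta> :: "'v \<Rightarrow> real" and w :: "'v \<Rightarrow> nat"
  assumes "\<And>v. v \<in> V \<Longrightarrow> 0 \<le> \<theta> v" and "r = 0 \<or> r < (\<Sum>v\<in>V. \<theta> v * w v)"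
  shows "\<forall>\<^sub>F n in sequentially. nat \<lceil>real n * r\<rceil> \<le> (\<Sum>v\<in>V. nat \<lfloor>\<theta> v * real n\<rfloor> * w v)"
proof (cases "r = 0")
  case False
  define d where "d = (\<Sum>v\<in>V. \<theta> v * w v) - r"
  have "0 < d" using assms(2) False by (auto simp: d_def)
  then obtain N where N: "real (\<Sum>v\<in>V. w v) / d < real N"
    using reals_Archimedean2 by blast
  \<comment> \<open>rounding down loses at most \<open>\<Sum>\<^sub>v w v\<close>, which \<open>n \<cdot> d\<close> eventually exceeds\<close>
  have "nat \<lceil>real n * r\<rceil> \<le> (\<Sum>v\<in>V. nat \<lfloor>\<theta> v * real n\<rfloor> * w v)" if "N \<le> n" for n
  proof -
    have "real (\<Sum>v\<in>V. w v) < real N * d"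
      using N \<open>0 < d\<close> by (simp add: divide_less_eq)
    also have "\<dots> \<le> real n * d"
      using that \<open>0 < d\<close> by (intro mult_right_mono) auto
    finally have "real n * r \<le> (\<Sum>v\<in>V. (\<theta> v * real n - 1) * w v)"
      by (simp add: d_def sum_subtractf left_diff_distrib sum_distrib_left algebra_simps)
    also have "\<dots> \<le> (\<Sum>v\<in>V. real (nat \<lfloor>\<theta> v * real n\<rfloor>) * w v)"
    proof (intro sum_mono mult_right_mono)
      show "\<theta> v * real n - 1 \<le> real (nat \<lfloor>\<theta> v * real n\<rfloor>)" if "v \<in> V" for v
        using assms(1)[OF that] by linarith
    qed simp
    finally have "real n * r \<le> real (\<Sum>v\<in>V. nat \<lfloor>\<theta> v * real n\<rfloor> * w v)"
      by simp
    then show ?thesis by linarith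
  qed
  then show ?thesis by (auto simp: eventually_sequentially)
qed simp

text \<open>Time sharing: code \<open>v\<close> runs with symbols of \<open>t v\<close> bits, so one block carries
  \<open>\<Sum>\<^sub>v t v \<cdot> w v j\<close> bits of message \<open>j\<close> and \<open>\<Sum>\<^sub>v t v\<close> bits per link.\<close>

lemma time_shared_error_free_code:
  fixes w :: "'v \<Rightarrow> 'n::finite \<Rightarrow> nat" and R :: "real^'n" and K :: "'k set"
  assumes code: "\<And>v t. v \<in> V \<Longrightarrow> zero_error_code K S A
                   (\<lambda>j. \<Pi>\<^sub>E i\<in>{..<w v j}. {0..<(2::int) ^ t}) {0..<(2::int) ^ t} (enc v t) (dec v t)"
    and "finite V" and links: "(\<Sum>v\<in>V. t v) \<le> n"
    and messages: "\<And>j. nat \<lceil>real n * R $ j\<rceil> \<le> (\<Sum>v\<in>V. t v * w v j)"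
  shows "\<exists>f g. valid_encoders n R K S (\<lambda>_. 1) f \<and> error_prob n R K S A f g = 0"
proof (rule zero_error_code_embed[where C="\<lambda>_. 1"])
  show "zero_error_code K S A
      (\<lambda>j. \<Pi>\<^sub>E v\<in>V. \<Pi>\<^sub>E i\<in>{..<w v j}. {0..<(2::int) ^ t v}) (\<Pi>\<^sub>E v\<in>V. {0..<(2::int) ^ t v})
      (\<lambda>k m. \<lambda>v\<in>V. enc v (t v) k (\<lambda>i\<in>S k. m i v))
      (\<lambda>j l y. \<lambda>v\<in>V. dec v (t v) j (\<lambda>k\<in>K. l k v) (\<lambda>i\<in>A j. y i v))"
    by (rule zero_error_code_PiE) (rule code)
  show "card (msg_set n R j) \<le> card (\<Pi>\<^sub>E v\<in>V. \<Pi>\<^sub>E i\<in>{..<w v j}. {0..<(2::int) ^ t v})" for j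
  proof -
    have "card (msg_set n R j) \<le> 2 ^ (\<Sum>v\<in>V. t v * w v j)"
      using messages[of j] by (simp add: msg_set_def power_increasing)
    also have "\<dots> = card (\<Pi>\<^sub>E v\<in>V. \<Pi>\<^sub>E i\<in>{..<w v j}. {0..<(2::int) ^ t v})"
      using \<open>finite V\<close> by (simp add: card_PiE card_symbol_vectors power_sum)
    finally show ?thesis .
  qed
  have "card (\<Pi>\<^sub>E v\<in>V. {0..<(2::int) ^ t v}) = 2 ^ (\<Sum>v\<in>V. t v)"
    using \<open>finite V\<close> by (simp add: card_PiE nat_power_eq power_sum)
  also have "\<dots> \<le> card (link_set n 1)"
    using links by (simp add: link_set_def power_increasing)
  finally show "card (\<Pi>\<^sub>E v\<in>V. {0..<(2::int) ^ t v}) \<le> card (link_set n ((\<lambda>_. 1) k))" for k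
    by simp
qed (use \<open>finite V\<close> in \<open>simp_all add: finite_PiE\<close>)

lemma time_sharing_achievable:
  fixes w :: "'v \<Rightarrow> 'n::finite \<Rightarrow> nat" and \<theta> :: "'v \<Rightarrow> real" and R :: "real^'n" and K :: "'k set"
  assumes code: "\<And>v t. v \<in> V \<Longrightarrow> zero_error_code K S A
                   (\<lambda>j. \<Pi>\<^sub>E i\<in>{..<w v j}. {0..<(2::int) ^ t}) {0..<(2::int) ^ t} (enc v t) (dec v t)"
    and "finite V" and \<theta>: "\<And>v. v \<in> V \<Longrightarrow> 0 \<le> \<theta> v" "(\<Sum>v\<in>V. \<theta> v) \<le> 1"
    and R: "\<forall>j. 0 \<le> R $ j" "\<forall>j. R $ j = 0 \<or> R $ j < (\<Sum>v\<in>V. \<theta> v * w v j)"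
  shows "achievable K S (\<lambda>_. 1) A R"
proof (rule achievable_if_eventually_error_free[OF R(1)])
  have "\<forall>\<^sub>F n in sequentially. \<forall>j. nat \<lceil>real n * R $ j\<rceil> \<le> (\<Sum>v\<in>V. nat \<lfloor>\<theta> v * real n\<rfloor> * w v j)"
    using R(2) by (intro eventually_all_finite eventually_le_floor_sum \<theta>(1)) auto
  then show "\<forall>\<^sub>F n in sequentially. \<exists>f g. valid_encoders n R K S (\<lambda>_. 1) f \<and> error_prob n R K S A f g = 0"
  proof eventually_elim
    case (elim n)
    have "(\<Sum>v\<in>V. real (nat \<lfloor>\<theta> v * real n\<rfloor>)) \<le> (\<Sum>v\<in>V. \<theta> v) * real n"
      unfolding sum_distrib_right using \<theta>(1) by (intro sum_mono) simp
    also have "\<dots> \<le> real n"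
      using \<theta> by (intro mult_left_le_one_le) (auto intro: sum_nonneg)
    finally have "(\<Sum>v\<in>V. nat \<lfloor>\<theta> v * real n\<rfloor>) \<le> n"
      by (metis of_nat_le_iff of_nat_sum)
    then show ?case
      using elim by (intro time_shared_error_free_code[OF code \<open>finite V\<close>]) auto
  qed
qed

section \<open>Linear codes decoded by peeling\<close>

text \<open>Linear codes over \<open>\<int>/s\<close>: message \<open>j\<close> is a vector of \<open>w j\<close> symbols, the symbol \<open>(j, i)\<close>
  being its \<open>i\<close>-th entry; sender \<open>k\<close> broadcasts the sum of the symbols listed in \<open>tab k\<close>.\<close>

definition lin_enc :: "int \<Rightarrow> ('k \<Rightarrow> ('n \<times> nat) list) \<Rightarrow> 'k \<Rightarrow> ('n \<Rightarrow> nat \<Rightarrow> int) \<Rightarrow> int" where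
  "lin_enc s tab k m = (\<Sum>q\<leftarrow>tab k. m (fst q) (snd q)) mod s"

text \<open>A decoding schedule is a list of steps \<open>(k, p)\<close>: starting from the side information,
  symbol \<open>p\<close> is recovered from the broadcast of sender \<open>k\<close> once all other symbols of \<open>tab k\<close>
  are known.\<close>

fun peel :: "('k \<Rightarrow> ('n \<times> nat) list) \<Rightarrow> 'k set \<Rightarrow> ('n \<times> nat) set \<Rightarrow> ('k \<times> ('n \<times> nat)) list
    \<Rightarrow> ('n \<times> nat) set option" where
  "peel tab K known [] = Some known"
| "peel tab K known ((k, p) # st) =
    (if k \<in> K \<and> p \<in> set (tab k) \<and> set (remove1 p (tab k)) \<subseteq> known
     then peel tab K (insert p known) st else None)"

fun peel_decode :: "int \<Rightarrow> ('k \<Rightarrow> ('n \<times> nat) list) \<Rightarrow> ('k \<Rightarrow> int) \<Rightarrow> ('k \<times> ('n \<times> nat)) list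
    \<Rightarrow> ('n \<times> nat \<Rightarrow> int) \<Rightarrow> ('n \<times> nat \<Rightarrow> int)" where
  "peel_decode s tab l [] x = x"
| "peel_decode s tab l ((k, p) # st) x =
    peel_decode s tab l st (x(p := (l k - (\<Sum>q\<leftarrow>remove1 p (tab k). x q)) mod s))"

definition lin_dec :: "int \<Rightarrow> ('k \<Rightarrow> ('n \<times> nat) list) \<Rightarrow> ('n \<Rightarrow> ('k \<times> ('n \<times> nat)) list)
    \<Rightarrow> ('n \<Rightarrow> nat) \<Rightarrow> 'n \<Rightarrow> ('k \<Rightarrow> int) \<Rightarrow> ('n \<Rightarrow> nat \<Rightarrow> int) \<Rightarrow> nat \<Rightarrow> int" where
  "lin_dec s tab sched w j l y =
     (\<lambda>i\<in>{..<w j}. peel_decode s tab l (sched j) (\<lambda>q. y (fst q) (snd q)) (j, i))"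

lemma peel_decode_correct:
  assumes "peel tab K known st = Some known'"
    and "\<forall>q\<in>known. x q = m q"
    and "\<And>k. k \<in> K \<Longrightarrow> l k = (\<Sum>q\<leftarrow>tab k. m q) mod s"
    and "\<And>k q. k \<in> K \<Longrightarrow> q \<in> set (tab k) \<Longrightarrow> 0 \<le> m q \<and> m q < s"
  shows "\<forall>q\<in>known'. peel_decode s tab l st x q = m q"
  using assms(1,2)
proof (induction st arbitrary: known x)
  case Nil
  then show ?case by simp
next
  case (Cons step st)
  obtain k p where step: "step = (k, p)" by (cases step)
  from Cons.prems(1) have k: "k \<in> K" "p \<in> set (tab k)" "set (remove1 p (tab k)) \<subseteq> known"
    and rest: "peel tab K (insert p known) st = Some known'"
    by (auto simp: step split: if_splits)
  have "(\<Sum>q\<leftarrow>remove1 p (tab k). x q) = (\<Sum>q\<leftarrow>remove1 p (tab k). m q)"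
    using k(3) Cons.prems(2) by (intro arg_cong[where f=sum_list] map_cong) auto
  moreover have "(\<Sum>q\<leftarrow>tab k. m q) = m p + (\<Sum>q\<leftarrow>remove1 p (tab k). m q)"
    using k(2) by (rule sum_list_map_remove1)
  ultimately have "(l k - (\<Sum>q\<leftarrow>remove1 p (tab k). x q)) mod s = m p"
    using assms(3,4)[OF k(1)] k(2) by (simp add: mod_simps)
  then have "\<forall>q\<in>insert p known. (x(p := (l k - (\<Sum>q\<leftarrow>remove1 p (tab k). x q)) mod s)) q = m q"
    using Cons.prems(2) by auto
  from Cons.IH[OF rest this] show ?case unfolding step peel_decode.simps .
qed

lemma linear_zero_error_code:
  fixes w :: "'n \<Rightarrow> nat" and s :: int
  assumes "0 < s"
    and tab: "\<And>k q. k \<in> K \<Longrightarrow> q \<in> set (tab k) \<Longrightarrow> fst q \<in> S k \<and> snd q < w (fst q)"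
    and sched: "\<And>j. \<exists>known. peel tab K {q. fst q \<in> A j} (sched j) = Some known
                         \<and> (\<forall>i<w j. (j, i) \<in> known)"
  shows "zero_error_code K S A (\<lambda>j. \<Pi>\<^sub>E i\<in>{..<w j}. {0..<s}) {0..<s} (lin_enc s tab)
           (lin_dec s tab sched w)"
  unfolding zero_error_code_def
proof (intro allI impI conjI ballI)
  fix m :: "'n \<Rightarrow> nat \<Rightarrow> int" and k
  show "lin_enc s tab k (restrict m (S k)) \<in> {0..<s}"
    using \<open>0 < s\<close> by (simp add: lin_enc_def)
next
  fix m :: "'n \<Rightarrow> nat \<Rightarrow> int" and j
  assume m: "\<forall>j. m j \<in> (\<Pi>\<^sub>E i\<in>{..<w j}. {0..<s})"
  define l where "l = (\<lambda>k\<in>K. lin_enc s tab k (restrict m (S k)))"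
  have "l k = (\<Sum>q\<leftarrow>tab k. m (fst q) (snd q)) mod s" if "k \<in> K" for k
  proof -
    have "(\<Sum>q\<leftarrow>tab k. restrict m (S k) (fst q) (snd q)) = (\<Sum>q\<leftarrow>tab k. m (fst q) (snd q))"
      using tab[OF that] by (intro arg_cong[where f=sum_list] map_cong) auto
    then show ?thesis using that by (simp add: l_def lin_enc_def)
  qed
  moreover have "0 \<le> m (fst q) (snd q) \<and> m (fst q) (snd q) < s" if "k \<in> K" "q \<in> set (tab k)" for k q
    using tab[OF that] m by (auto simp: PiE_iff)
  moreover obtain known where known: "peel tab K {q. fst q \<in> A j} (sched j) = Some known"
    "\<And>i. i < w j \<Longrightarrow> (j, i) \<in> known"
    using sched by blast
  ultimately have "\<forall>q\<in>known. peel_decode s tab l (sched j) (\<lambda>q. restrict m (A j) (fst q) (snd q)) q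
      = m (fst q) (snd q)"
    by (intro peel_decode_correct[where m="\<lambda>q. m (fst q) (snd q)"]) auto
  then show "lin_dec s tab sched w j (\<lambda>k\<in>K. lin_enc s tab k (restrict m (S k))) (restrict m (A j)) = m j"
    using known(2) m by (auto simp: lin_dec_def l_def[symmetric] PiE_iff extensional_def)
qed

section \<open>The six vertex codes and achievability\<close>

definition senders :: "4 set set" where
  "senders = {S. S \<noteq> {}}"

definition side_info :: "4 \<Rightarrow> 4 set" where
  "side_info j = (if j = 1 then {4} else if j = 2 then {3, 4} else if j = 3 then {1, 2} else {2, 3})"

definition message_index :: "4 \<Rightarrow> nat" where
  "message_index j = (if j = 1 then 0 else if j = 2 then 1 else if j = 3 then 2 else 3)"

definition subset_index :: "4 set \<Rightarrow> nat" where
  "subset_index k = (if 1 \<in> k then 1 else 0) + (if 2 \<in> k then 2 else 0)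
     + (if 3 \<in> k then 4 else 0) + (if 4 \<in> k then 8 else 0)"

text \<open>Six linear codes with one symbol per link; their rate vectors \<open>vertex_rates\<close> are vertices
  of \<open>rate_polytope\<close> below.  Entry \<open>subset_index k\<close> of table \<open>v\<close> lists the symbols summed by
  sender \<open>k\<close>, and schedule \<open>v\<close> of receiver \<open>j\<close> is a peeling order certifying that \<open>j\<close> decodes.\<close>

definition vertex_rates :: "nat list list" where
  "vertex_rates = [[2,8,8,4], [4,6,8,4], [4,8,4,8], [4,8,6,6], [6,6,6,6], [8,4,4,4]]"

definition vertex_tables :: "(4 \<times> nat) list list list" where
  "vertex_tables =
    [[[], [(1,0)], [(2,1),(2,3),(2,5),(2,6)], [(2,0),(2,2),(2,4),(2,7)], [(3,2),(3,5),(3,6)], [(3,2)], [(2,0),(3,0)], [(2,6),(3,3),(3,4)],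
      [(4,0),(4,2),(4,3)], [(1,0),(1,1),(4,2)], [(2,1),(2,2),(2,5),(4,1)], [(1,0),(2,3),(2,6),(4,3)], [(3,1),(3,3)], [(1,1),(3,5)], [(2,5),(2,6),(3,4)], [(2,4),(3,7),(4,1)]],
     [[], [(1,0),(1,1),(1,3)], [(2,2)], [(1,3),(2,2)], [(3,1),(3,3),(3,4),(3,5)], [(1,2),(3,0),(3,2),(3,6)], [(2,0),(2,4),(3,1),(3,5)], [(1,3),(2,0),(3,0),(3,4)],
      [(4,0),(4,1),(4,3)], [(1,1),(4,3)], [(2,3),(4,0)], [(1,2),(4,2)], [(3,1),(3,2),(3,7),(4,1)], [(1,2),(3,2)], [(2,5),(3,0),(3,5),(4,1)], [(2,1),(3,5)]],
     [[], [(1,1),(1,2)], [(2,0),(2,6)], [(1,3),(2,1)], [(3,0),(3,2)], [(1,0),(1,3),(3,2)], [(2,2),(2,4),(3,1),(3,3)], [(1,1),(2,4),(2,6),(3,3)],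
      [(4,1),(4,3),(4,4)], [(1,1),(4,4)], [(2,3),(4,4),(4,6)], [(2,6),(4,5)], [(3,2),(4,0)], [(1,0),(4,2),(4,3),(4,4)], [(2,5),(4,1),(4,4)], [(1,3),(2,7),(3,1),(4,7)]],
     [[], [(1,0),(1,2),(1,3)], [(2,2),(2,3),(2,4),(2,7)], [(1,0),(1,1),(2,4),(2,5)], [(3,0),(3,3),(3,5)], [(1,1),(1,2),(3,5)], [(2,0),(3,2),(3,3)], [(1,1),(2,6),(2,7),(3,4)],
      [(4,1),(4,3)], [(1,0),(1,3),(4,2)], [(2,0),(2,1),(2,7),(4,5)], [(1,0),(2,2),(4,4)], [(3,5),(4,3)], [(1,0),(4,0),(4,2)], [(2,4),(2,7),(3,2),(4,3)], [(2,4),(3,1)]],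
     [[], [(1,0),(1,1)], [(2,0),(2,1)], [(1,4)], [(3,3)], [(1,5),(3,5)], [(2,3),(2,5),(3,4),(3,5)], [(1,2),(2,2),(2,3),(3,2)],
      [(4,1),(4,4)], [(1,1),(1,4),(4,0),(4,2)], [(2,4),(2,5),(4,1),(4,2)], [(1,3),(4,0)], [(3,5),(4,3)], [(1,2),(1,5),(4,3),(4,5)], [(2,1),(2,5),(3,0),(4,0)], [(2,4),(3,1),(3,2),(4,2)]],
     [[], [(1,3),(1,4),(1,5)], [(2,1)], [(1,5)], [(3,0),(3,1),(3,2),(3,3)], [(1,0),(1,1),(1,4),(1,7)], [(2,2),(3,2)], [(1,2),(1,5)],
      [(4,1),(4,3)], [(1,0),(1,5),(1,6),(4,1)], [(2,3),(4,1),(4,2)], [(1,3)], [(3,1),(3,3),(4,0),(4,1)], [(1,2),(1,6),(1,7),(4,0)], [(2,0),(2,3),(3,3),(4,2)], [(1,0)]]]"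

definition vertex_schedules :: "(4 set \<times> (4 \<times> nat)) list list list" where
  "vertex_schedules =
    [[[({1},(1,0)), ({1,3},(3,2)), ({1,4},(1,1)), ({1,3,4},(3,5)), ({3},(3,6))],
      [({1},(1,0)), ({1,4},(1,1)), ({2,3},(2,0)), ({1,2,3},(2,6)), ({1,2,4},(2,3)), ({2,3,4},(2,5)), ({1,2,3,4},(2,4)), ({2},(2,1)), ({2,4},(2,2)), ({1,2},(2,7))],
      [({1,3},(3,2)), ({1,4},(4,2)), ({2,3},(3,0)), ({2,4},(4,1)), ({1,2,4},(4,3)), ({1,3,4},(3,5)), ({2,3,4},(3,4)), ({1,2,3,4},(3,7)), ({3},(3,6)), ({4},(4,0)), ({1,2,3},(3,3)), ({3,4},(3,1))],
      [({1},(1,0)), ({2,4},(4,1)), ({1,2,4},(4,3)), ({1,3,4},(1,1)), ({1,4},(4,2)), ({4},(4,0))]],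
     [[({2},(2,2)), ({1,2},(1,3)), ({1,4},(1,1)), ({2,4},(2,3)), ({1,2,4},(1,2)), ({1,3,4},(3,2)), ({1},(1,0))],
      [({2},(2,2)), ({1,2},(1,3)), ({1,3},(1,2)), ({1,4},(1,1)), ({2,4},(2,3)), ({1,2,3},(2,0)), ({2,3,4},(2,5)), ({1,2,3,4},(2,1)), ({1},(1,0)), ({2,3},(2,4))],
      [({1,4},(4,3)), ({2,4},(4,0)), ({1,2,4},(4,2)), ({1,3,4},(3,2)), ({1,2,3,4},(3,5)), ({4},(4,1)), ({2,3},(3,1)), ({3,4},(3,7)), ({2,3,4},(3,0)), ({1,3},(3,6)), ({1,2,3},(3,4)), ({3},(3,3))],
      [({1,2},(1,3)), ({1,3},(1,2)), ({2,4},(4,0)), ({3,4},(4,1)), ({1,2,4},(4,2)), ({4},(4,3)), ({1,4},(1,1)), ({1},(1,0))]],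
     [[({1,4},(1,1)), ({2,4},(2,3)), ({3,4},(3,2)), ({1,2,4},(2,6)), ({1,3,4},(1,0)), ({2,3,4},(2,5)), ({1},(1,2)), ({2},(2,0)), ({3},(3,0)), ({1,3},(1,3)), ({1,2},(2,1))],
      [({1,4},(1,1)), ({2,4},(2,3)), ({1,2,4},(2,6)), ({1,3,4},(1,0)), ({2,3,4},(2,5)), ({1},(1,2)), ({2},(2,0)), ({1,3},(1,3)), ({1,2,3},(2,4)), ({1,2,3,4},(2,7)), ({1,2},(2,1)), ({2,3},(2,2))],
      [({1,3},(3,2)), ({1,4},(4,4)), ({2,4},(4,6)), ({3,4},(4,0)), ({1,2,3},(3,3)), ({1,2,4},(4,5)), ({2,3,4},(4,1)), ({3},(3,0)), ({4},(4,3)), ({2,3},(3,1)), ({1,3,4},(4,2)), ({1,2,3,4},(4,7))],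
      [({1,2},(1,3)), ({1,3},(1,0)), ({3,4},(4,0)), ({1,2,3},(1,1)), ({1,2,4},(4,5)), ({1,2,3,4},(4,7)), ({1},(1,2)), ({1,4},(4,4)), ({2,4},(4,6)), ({2,3,4},(4,1)), ({4},(4,3)), ({1,3,4},(4,2))]],
     [[({3,4},(3,5)), ({1,3,4},(1,0)), ({1,4},(1,3)), ({1,2,4},(2,2)), ({1},(1,2)), ({1,3},(1,1))],
      [({2,3},(2,0)), ({1,3,4},(1,0)), ({1,2,3,4},(2,4)), ({1,4},(1,3)), ({1,2,4},(2,2)), ({2,3,4},(2,7)), ({1},(1,2)), ({2},(2,3)), ({1,3},(1,1)), ({2,4},(2,1)), ({1,2,3},(2,6)), ({1,2},(2,5))],
      [({1,3},(3,5)), ({1,4},(4,2)), ({2,4},(4,5)), ({3,4},(4,3)), ({1,2,3},(3,4)), ({1,2,4},(4,4)), ({1,3,4},(4,0)), ({2,3,4},(3,2)), ({1,2,3,4},(3,1)), ({4},(4,1)), ({2,3},(3,3)), ({3},(3,0))],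
      [({2,4},(4,5)), ({3,4},(4,3)), ({1,2,3},(1,1)), ({4},(4,1)), ({1,2},(1,0)), ({1,3},(1,2)), ({1,2,4},(4,4)), ({1},(1,3)), ({1,4},(4,2)), ({1,3,4},(4,0))]],
     [[({3},(3,3)), ({1,2},(1,4)), ({1,4},(1,1)), ({3,4},(3,5)), ({1,2,4},(1,3)), ({1},(1,0)), ({1,3},(1,5)), ({1,3,4},(1,2))],
      [({1,2},(1,4)), ({1,3},(1,5)), ({1,4},(1,1)), ({1,2,4},(1,3)), ({1,3,4},(1,2)), ({1,2,3,4},(2,4)), ({1},(1,0)), ({2,4},(2,5)), ({2,3,4},(2,1)), ({2},(2,0)), ({2,3},(2,3)), ({1,2,3},(2,2))],
      [({3},(3,3)), ({1,3},(3,5)), ({2,3},(3,4)), ({3,4},(4,3)), ({1,2,3},(3,2)), ({1,2,4},(4,0)), ({1,3,4},(4,5)), ({2,3,4},(3,0)), ({1,4},(4,2)), ({2,4},(4,1)), ({1,2,3,4},(3,1)), ({4},(4,4))],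
      [({1,2},(1,4)), ({1,3},(1,5)), ({3,4},(4,3)), ({1,2,3},(1,2)), ({1,3,4},(4,5)), ({2,3,4},(4,0)), ({1,2,3,4},(4,2)), ({1,4},(1,1)), ({2,4},(4,1)), ({1,2,4},(1,3)), ({1},(1,0)), ({4},(4,4))]],
     [[({2},(2,1)), ({1,2},(1,5)), ({2,4},(2,3)), ({1,2,3},(1,2)), ({1,2,4},(1,3)), ({1,2,3,4},(1,0)), ({1},(1,4)), ({1,4},(1,6)), ({1,3,4},(1,7)), ({1,3},(1,1))],
      [({2},(2,1)), ({1,2},(1,5)), ({2,3},(2,2)), ({2,4},(2,3)), ({1,2,3},(1,2)), ({1,2,4},(1,3)), ({2,3,4},(2,0)), ({1,2,3,4},(1,0)), ({1},(1,4)), ({1,4},(1,6)), ({1,3,4},(1,7)), ({1,3},(1,1))],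
      [({1,4},(4,1)), ({2,3},(3,2)), ({2,4},(4,2)), ({1,3,4},(4,0)), ({2,3,4},(3,3)), ({4},(4,3)), ({3,4},(3,1)), ({3},(3,0))],
      [({1,2},(1,5)), ({1,2,3},(1,2)), ({1,2,4},(1,3)), ({2,3,4},(4,2)), ({1,2,3,4},(1,0)), ({1},(1,4)), ({2,4},(4,1)), ({3,4},(4,0)), ({4},(4,3)), ({1,4},(1,6)), ({1,3,4},(1,7)), ({1,3},(1,1))]]]"

definition vertex_rate :: "nat \<Rightarrow> 4 \<Rightarrow> nat" where
  "vertex_rate v j = vertex_rates ! v ! message_index j"

definition vertex_table :: "nat \<Rightarrow> 4 set \<Rightarrow> (4 \<times> nat) list" where
  "vertex_table v k = vertex_tables ! v ! subset_index k"

definition vertex_schedule :: "nat \<Rightarrow> 4 \<Rightarrow> (4 set \<times> (4 \<times> nat)) list" where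
  "vertex_schedule v j = vertex_schedules ! v ! message_index j"

lemma UNIV_4_cases: obtains "(j::4) = 1" | "j = 2" | "j = 3" | "j = 4"
  using UNIV_4 by blast

lemma vertex_tables_wf:
  "list_all (\<lambda>v. list_all (\<lambda>b. list_all
     (\<lambda>q. odd (b div 2 ^ message_index (fst q)) \<and> snd q < vertex_rate v (fst q))
     (vertex_tables ! v ! b)) [0..<16]) [0..<6]"
  by (simp add: upt_rec vertex_tables_def vertex_rate_def vertex_rates_def message_index_def)

lemma odd_subset_index_iff: "odd (subset_index k div 2 ^ message_index i) \<longleftrightarrow> i \<in> k"
  by (cases i rule: UNIV_4_cases) (auto simp: subset_index_def message_index_def)

lemma vertex_code:
  assumes "v < 6" "0 < s"
  shows "zero_error_code senders id side_info (\<lambda>j. \<Pi>\<^sub>E i\<in>{..<vertex_rate v j}. {0..<s}) {0..<s}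
           (lin_enc s (vertex_table v)) (lin_dec s (vertex_table v) (vertex_schedule v) (vertex_rate v))"
proof (rule linear_zero_error_code[OF \<open>0 < s\<close>])
  have v: "v \<in> {0,1,2,3,4,5}" using \<open>v < 6\<close> by auto
  show "fst q \<in> id k \<and> snd q < vertex_rate v (fst q)" if "q \<in> set (vertex_table v k)" for k q
  proof -
    have "subset_index k < 16" by (simp add: subset_index_def)
    then show ?thesis
      using vertex_tables_wf \<open>v < 6\<close> that
      by (auto simp: vertex_table_def list_all_iff odd_subset_index_iff[symmetric])
  qed
  show "\<exists>known. peel (vertex_table v) senders {q. fst q \<in> side_info j} (vertex_schedule v j) = Some known
          \<and> (\<forall>i<vertex_rate v j. (j, i) \<in> known)" for j
    using v by (cases j rule: UNIV_4_cases; elim insertE emptyE)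
      (simp_all add: vertex_schedule_def vertex_schedules_def vertex_table_def vertex_tables_def
         vertex_rate_def vertex_rates_def message_index_def subset_index_def senders_def
         side_info_def, simp_all add: less_Suc_eq numeral_eq_Suc)
qed

definition rate_polytope :: "(real^4) set" where
  "rate_polytope = {R. (\<forall>j. 0 \<le> R $ j) \<and> (\<forall>j. R $ j \<le> 8) \<and>
     R $ 1 + R $ 2 \<le> 12 \<and> R $ 1 + R $ 3 \<le> 12 \<and> R $ 1 + R $ 4 \<le> 12 \<and>
     R $ 3 + R $ 4 \<le> 12 \<and> R $ 1 + R $ 2 + R $ 3 \<le> 18}"

lemma six_vertex_weights:
  fixes a b c d e f :: real
  assumes "0 \<le> a" "0 \<le> b" "0 \<le> c" "0 \<le> d" "0 \<le> e" "0 \<le> f" "a + b + c + d + e + f \<le> 1"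
    "R $ 1 \<le> 2*a + 4*b + 4*c + 4*d + 6*e + 8*f" "R $ 2 \<le> 8*a + 6*b + 8*c + 8*d + 6*e + 4*f"
    "R $ 3 \<le> 8*a + 8*b + 4*c + 6*d + 6*e + 4*f" "R $ 4 \<le> 4*a + 4*b + 8*c + 6*d + 6*e + 4*f"
  shows "\<exists>\<theta>::nat \<Rightarrow> real. (\<forall>v<6. 0 \<le> \<theta> v) \<and> (\<Sum>v<6. \<theta> v) \<le> 1 \<and> (\<forall>j. R $ j \<le> (\<Sum>v<6. \<theta> v * vertex_rate v j))"
proof (intro exI conjI allI impI)
  let ?\<theta> = "nth [a, b, c, d, e, f]"
  have sum6: "(\<Sum>v<6. g v) = g 0 + g 1 + g 2 + g 3 + g 4 + g 5" for g :: "nat \<Rightarrow> real"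
    by (simp add: eval_nat_numeral)
  show "0 \<le> ?\<theta> v" if "v < 6" for v
    using that assms(1-6) by (auto simp: less_Suc_eq eval_nat_numeral)
  show "(\<Sum>v<6. ?\<theta> v) \<le> 1" using assms(7) by (simp add: sum6)
  show "R $ j \<le> (\<Sum>v<6. ?\<theta> v * vertex_rate v j)" for j
    using assms(8-11) by (cases j rule: UNIV_4_cases)
      (simp_all add: sum6 vertex_rate_def vertex_rates_def message_index_def algebra_simps)
qed

text \<open>The weights depend only on \<open>R $ 1\<close> and \<open>R $ 3\<close>: on each of the eight regions below, the
  bounds the polytope imposes on \<open>R $ 2\<close> and \<open>R $ 4\<close> are affine functions of them.\<close>

lemma rate_polytope_dominated:
  assumes "R \<in> rate_polytope"
  shows "\<exists>\<theta>::nat \<Rightarrow> real. (\<forall>v<6. 0 \<le> \<theta> v) \<and> (\<Sum>v<6. \<theta> v) \<le> 1 \<and> (\<forall>j. R $ j \<le> (\<Sum>v<6. \<theta> v * vertex_rate v j))"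
proof -
  let ?u = "R $ 1" and ?w = "R $ 3"
  have R: "\<forall>j. 0 \<le> R $ j" "\<forall>j. R $ j \<le> 8" "R $ 1 + R $ 2 \<le> 12" "R $ 1 + R $ 3 \<le> 12"
    "R $ 1 + R $ 4 \<le> 12" "R $ 3 + R $ 4 \<le> 12" "R $ 1 + R $ 2 + R $ 3 \<le> 18"
    using assms by (auto simp: rate_polytope_def)
  then have R': "0 \<le> R $ 1" "0 \<le> R $ 2" "0 \<le> R $ 3" "0 \<le> R $ 4"
    "R $ 1 \<le> 8" "R $ 2 \<le> 8" "R $ 3 \<le> 8" "R $ 4 \<le> 8" by auto
  consider (r1) "?u \<le> 4" "?w \<le> 4" | (r2) "4 \<le> ?u" "?w \<le> 4" | (r3) "?u \<le> 4" "4 \<le> ?w" "?w \<le> 6"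
    | (r4) "4 \<le> ?w" "?w \<le> 6" "?w \<le> ?u" | (r5) "4 \<le> ?u" "?u \<le> ?w" "?w \<le> 6"
    | (r6) "?u \<le> 4" "6 \<le> ?w" "?u + ?w \<le> 10" | (r7) "?u \<le> 4" "6 \<le> ?w" "10 \<le> ?u + ?w"
    | (r8) "4 \<le> ?u" "6 \<le> ?w"
    by linarith
  then show ?thesis
  proof cases
    case r1
    show ?thesis by (rule six_vertex_weights[of 0 0 1 0 0 0]) (use R R' r1 in \<open>simp_all add: field_simps\<close>)
  next
    case r2
    show ?thesis by (rule six_vertex_weights[of 0 0 "(8 - ?u) / 4" 0 0 "(?u - 4) / 4"])
      (use R R' r2 in \<open>simp_all add: field_simps\<close>)
  next
    case r3
    show ?thesis by (rule six_vertex_weights[of 0 0 "(6 - ?w) / 2" "(?w - 4) / 2" 0 0])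
      (use R R' r3 in \<open>simp_all add: field_simps\<close>)
  next
    case r4
    show ?thesis by (rule six_vertex_weights[of 0 0 "(12 - ?u - ?w) / 4" 0 "(?w - 4) / 2" "(?u - ?w) / 4"])
      (use R R' r4 in \<open>simp_all add: field_simps\<close>)
  next
    case r5
    show ?thesis by (rule six_vertex_weights[of 0 0 "(6 - ?w) / 2" "(?w - ?u) / 2" "(?u - 4) / 2" 0])
      (use R R' r5 in \<open>simp_all add: field_simps\<close>)
  next
    case r6
    show ?thesis by (rule six_vertex_weights[of "(?w - 6) / 2" 0 0 "(8 - ?w) / 2" 0 0])
      (use R R' r6 in \<open>simp_all add: field_simps\<close>)
  next
    case r7
    show ?thesis by (rule six_vertex_weights[of "(4 - ?u) / 2" "(?u + ?w - 10) / 2" 0 "(8 - ?w) / 2" 0 0])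
      (use R R' r7 in \<open>simp_all add: field_simps\<close>)
  next
    case r8
    show ?thesis by (rule six_vertex_weights[of 0 "(?w - 6) / 2" 0 "(12 - ?u - ?w) / 2" "(?u - 4) / 2" 0])
      (use R R' r8 in \<open>simp_all add: field_simps\<close>)
  qed
qed

lemma vertex_time_sharing_achievable:
  fixes \<theta> :: "nat \<Rightarrow> real"
  assumes "\<And>v. v < 6 \<Longrightarrow> 0 \<le> \<theta> v" "(\<Sum>v<6. \<theta> v) \<le> 1"
    and "\<forall>j. 0 \<le> R $ j" "\<forall>j. R $ j = 0 \<or> R $ j < (\<Sum>v<6. \<theta> v * vertex_rate v j)"
  shows "achievable senders id (\<lambda>_. 1) side_info R"
  using assms
  by (intro time_sharing_achievable[where V="{..<6}" and w=vertex_rate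
        and enc="\<lambda>v t. lin_enc (2 ^ t) (vertex_table v)"
        and dec="\<lambda>v t. lin_dec (2 ^ t) (vertex_table v) (vertex_schedule v) (vertex_rate v)"])
     (auto intro: vertex_code)

lemma rate_polytope_subset_closure:
  "rate_polytope \<subseteq> closure {R. achievable senders id (\<lambda>_. 1) side_info R}"
proof
  fix R assume R: "R \<in> rate_polytope"
  then obtain \<theta> :: "nat \<Rightarrow> real" where \<theta>: "\<forall>v<6. 0 \<le> \<theta> v" "(\<Sum>v<6. \<theta> v) \<le> 1"
    "\<forall>j. R $ j \<le> (\<Sum>v<6. \<theta> v * vertex_rate v j)"
    using rate_polytope_dominated by blast
  have R0: "0 \<le> R $ j" for j using R by (simp add: rate_polytope_def)
  \<comment> \<open>shrinking \<open>R\<close> by a factor \<open>c < 1\<close> makes the domination strict\<close>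
  have "achievable senders id (\<lambda>_. 1) side_info (c *\<^sub>R R)" if "0 \<le> c" "c < 1" for c
  proof (rule vertex_time_sharing_achievable[of \<theta>])
    show "\<forall>j. (c *\<^sub>R R) $ j = 0 \<or> (c *\<^sub>R R) $ j < (\<Sum>v<6. \<theta> v * vertex_rate v j)"
    proof
      fix j
      have "c * R $ j < R $ j" if "R $ j \<noteq> 0"
        using \<open>c < 1\<close> R0[of j] that by (simp add: mult_less_cancel_right2 less_le)
      then show "(c *\<^sub>R R) $ j = 0 \<or> (c *\<^sub>R R) $ j < (\<Sum>v<6. \<theta> v * vertex_rate v j)"
        using \<theta>(3)[rule_format, of j] by (cases "R $ j = 0") auto
    qed
  qed (use \<theta> R0 that in auto)
  then have "\<forall>n. (1 - 1 / real (Suc n)) *\<^sub>R R \<in> {R. achievable senders id (\<lambda>_. 1) side_info R}"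
    by simp
  moreover have "(\<lambda>n. 1 - 1 / real (Suc n)) \<longlonglongrightarrow> 1 - 0"
    by (intro tendsto_diff tendsto_const LIMSEQ_Suc[OF lim_const_over_n])
  then have "(\<lambda>n. (1 - 1 / real (Suc n)) *\<^sub>R R) \<longlonglongrightarrow> R"
    using tendsto_scaleR[OF _ tendsto_const, of _ "1 - 0" sequentially R] by simp
  ultimately show "R \<in> closure {R. achievable senders id (\<lambda>_. 1) side_info R}"
    unfolding closure_sequential by (intro exI[where x="\<lambda>n. (1 - 1 / real (Suc n)) *\<^sub>R R"]) auto
qed

lemma closed_rate_polytope: "closed rate_polytope"
  unfolding rate_polytope_def
  by (intro closed_Collect_conj closed_Collect_all closed_Collect_le continuous_intros)

section \<open>Entropy under a uniform distribution\<close>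

text \<open>Shannon entropy (in nats) of \<open>X\<close> when \<open>\<omega>\<close> is uniformly distributed on the finite set \<open>\<Omega>\<close>:
  \<open>X\<close> takes the value \<open>X \<omega>\<close> with probability \<open>fiber_card \<Omega> X \<omega> / card \<Omega>\<close>.\<close>

definition fiber_card :: "'a set \<Rightarrow> ('a \<Rightarrow> 'b) \<Rightarrow> 'a \<Rightarrow> nat" where
  "fiber_card \<Omega> X \<omega> = card {\<omega>'\<in>\<Omega>. X \<omega>' = X \<omega>}"

definition uniform_entropy :: "'a set \<Rightarrow> ('a \<Rightarrow> 'b) \<Rightarrow> real" where
  "uniform_entropy \<Omega> X = (\<Sum>\<omega>\<in>\<Omega>. ln (card \<Omega> / fiber_card \<Omega> X \<omega>)) / card \<Omega>"

lemma fiber_card_pos: "finite \<Omega> \<Longrightarrow> \<omega> \<in> \<Omega> \<Longrightarrow> 0 < fiber_card \<Omega> X \<omega>"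
  unfolding fiber_card_def by (subst card_gt_0_iff) auto

lemma fiber_card_le: "finite \<Omega> \<Longrightarrow> fiber_card \<Omega> X \<omega> \<le> card \<Omega>"
  unfolding fiber_card_def by (rule card_mono) auto

lemma real_fiber_card:
  "finite \<Omega> \<Longrightarrow> real (fiber_card \<Omega> X \<omega>) = (\<Sum>\<omega>'\<in>\<Omega>. if X \<omega>' = X \<omega> then 1 else 0)"
proof -
  assume "finite \<Omega>"
  have "real (fiber_card \<Omega> X \<omega>) = (\<Sum>\<omega>'\<in>{\<omega>'\<in>\<Omega>. X \<omega>' = X \<omega>}. 1)"
    by (simp add: fiber_card_def)
  also have "\<dots> = (\<Sum>\<omega>'\<in>\<Omega>. if X \<omega>' = X \<omega> then 1 else 0)"
    using \<open>finite \<Omega>\<close> by (rule sum.inter_filter)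
  finally show ?thesis .
qed

lemma uniform_entropy_cong:
  assumes "\<And>\<omega> \<omega>'. \<omega> \<in> \<Omega> \<Longrightarrow> \<omega>' \<in> \<Omega> \<Longrightarrow> X \<omega> = X \<omega>' \<longleftrightarrow> Y \<omega> = Y \<omega>'"
  shows "uniform_entropy \<Omega> X = uniform_entropy \<Omega> Y"
proof -
  have fiber: "fiber_card \<Omega> X \<omega> = fiber_card \<Omega> Y \<omega>" if "\<omega> \<in> \<Omega>" for \<omega>
  proof -
    have "{\<omega>'\<in>\<Omega>. X \<omega>' = X \<omega>} = {\<omega>'\<in>\<Omega>. Y \<omega>' = Y \<omega>}" using assms that by blast
    then show ?thesis by (simp add: fiber_card_def)
  qed
  show ?thesis
    unfolding uniform_entropy_def by (intro arg_cong2[where f="(/)"] sum.cong refl) (simp only: fiber)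
qed

lemma uniform_entropy_le_if_determined:
  assumes "finite \<Omega>" and det: "\<And>\<omega> \<omega>'. \<omega> \<in> \<Omega> \<Longrightarrow> \<omega>' \<in> \<Omega> \<Longrightarrow> Y \<omega> = Y \<omega>' \<Longrightarrow> X \<omega> = X \<omega>'"
  shows "uniform_entropy \<Omega> X \<le> uniform_entropy \<Omega> Y"
proof -
  have "ln (card \<Omega> / fiber_card \<Omega> X \<omega>) \<le> ln (card \<Omega> / fiber_card \<Omega> Y \<omega>)" if "\<omega> \<in> \<Omega>" for \<omega>
  proof -
    have "{\<omega>'\<in>\<Omega>. Y \<omega>' = Y \<omega>} \<subseteq> {\<omega>'\<in>\<Omega>. X \<omega>' = X \<omega>}"
      using det that by blast
    then have "fiber_card \<Omega> Y \<omega> \<le> fiber_card \<Omega> X \<omega>"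
      unfolding fiber_card_def using \<open>finite \<Omega>\<close> by (intro card_mono) auto
    then have "card \<Omega> / fiber_card \<Omega> X \<omega> \<le> card \<Omega> / fiber_card \<Omega> Y \<omega>"
      using fiber_card_pos[OF \<open>finite \<Omega>\<close> that, of Y] by (intro divide_left_mono) auto
    moreover have "0 < card \<Omega> / fiber_card \<Omega> X \<omega>"
      using fiber_card_pos[OF \<open>finite \<Omega>\<close> that, of X] fiber_card_le[OF \<open>finite \<Omega>\<close>, of X \<omega>] by simp
    ultimately show ?thesis by simp
  qed
  then show ?thesis unfolding uniform_entropy_def by (intro divide_right_mono sum_mono) auto
qed

lemma uniform_entropy_nonneg:
  assumes "finite \<Omega>"
  shows "0 \<le> uniform_entropy \<Omega> X"
proof -
  have "0 \<le> ln (card \<Omega> / fiber_card \<Omega> X \<omega>)" if "\<omega> \<in> \<Omega>" for \<omega>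
  proof (rule ln_ge_zero)
    show "1 \<le> card \<Omega> / fiber_card \<Omega> X \<omega>"
      using fiber_card_pos[OF assms that, of X] fiber_card_le[OF assms, of X \<omega>] by simp
  qed
  then show ?thesis unfolding uniform_entropy_def by (intro divide_nonneg_nonneg sum_nonneg) auto
qed

lemma uniform_entropy_inj:
  assumes "inj_on X \<Omega>"
  shows "uniform_entropy \<Omega> X = ln (card \<Omega>)"
proof -
  have "fiber_card \<Omega> X \<omega> = 1" if "\<omega> \<in> \<Omega>" for \<omega>
  proof -
    have "{\<omega>'\<in>\<Omega>. X \<omega>' = X \<omega>} = {\<omega>}" using assms that by (auto simp: inj_on_def)
    then show ?thesis by (simp add: fiber_card_def)
  qed
  then have "uniform_entropy \<Omega> X = (\<Sum>\<omega>\<in>\<Omega>. ln (card \<Omega>)) / card \<Omega>"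
    unfolding uniform_entropy_def by (intro arg_cong2[where f="(/)"] sum.cong) auto
  also have "\<dots> = ln (card \<Omega>)"
    by (cases "card \<Omega> = 0") auto
  finally show ?thesis .
qed

lemma uniform_entropy_const: "uniform_entropy \<Omega> (\<lambda>_. c) = 0"
  by (simp add: uniform_entropy_def fiber_card_def)

lemma sum_inverse_fiber_card:
  assumes "finite \<Omega>"
  shows "(\<Sum>\<omega>\<in>\<Omega>. 1 / fiber_card \<Omega> X \<omega>) = card (X ` \<Omega>)"
proof -
  have "(\<Sum>\<omega>\<in>\<Omega>. 1 / fiber_card \<Omega> X \<omega>) = (\<Sum>x\<in>X ` \<Omega>. \<Sum>\<omega>\<in>{\<omega>\<in>\<Omega>. X \<omega> = x}. 1 / fiber_card \<Omega> X \<omega>)"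
    by (rule sum.image_gen[OF assms])
  also have "\<dots> = (\<Sum>x\<in>X ` \<Omega>. 1)"
  proof (rule sum.cong[OF refl])
    fix x assume "x \<in> X ` \<Omega>"
    then have "{\<omega>\<in>\<Omega>. X \<omega> = x} \<noteq> {}" by blast
    moreover have "fiber_card \<Omega> X \<omega> = card {\<omega>\<in>\<Omega>. X \<omega> = x}" if "\<omega> \<in> {\<omega>\<in>\<Omega>. X \<omega> = x}" for \<omega>
      using that by (simp add: fiber_card_def)
    ultimately show "(\<Sum>\<omega>\<in>{\<omega>\<in>\<Omega>. X \<omega> = x}. 1 / fiber_card \<Omega> X \<omega>) = 1"
      using assms by simp
  qed
  finally show ?thesis by simp
qed

lemma uniform_entropy_le_ln_card_image:
  assumes "finite \<Omega>" "\<Omega> \<noteq> {}"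
  shows "uniform_entropy \<Omega> X \<le> ln (card (X ` \<Omega>))"
proof -
  define N where "N = real (card \<Omega>)"
  define M where "M = real (card (X ` \<Omega>))"
  have "0 < N" "0 < M" using assms by (simp_all add: N_def M_def card_gt_0_iff)
  have fiber: "0 < real (fiber_card \<Omega> X \<omega>)" if "\<omega> \<in> \<Omega>" for \<omega>
    using fiber_card_pos[OF assms(1) that] by simp
  have "ln (N / (M * fiber_card \<Omega> X \<omega>)) = ln (N / fiber_card \<Omega> X \<omega>) - ln M" if "\<omega> \<in> \<Omega>" for \<omega>
    using \<open>0 < N\<close> \<open>0 < M\<close> fiber[OF that] by (simp add: ln_div ln_mult)
  then have "(\<Sum>\<omega>\<in>\<Omega>. ln (N / (M * fiber_card \<Omega> X \<omega>))) = (\<Sum>\<omega>\<in>\<Omega>. ln (N / fiber_card \<Omega> X \<omega>)) - N * ln M"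
    by (simp add: sum_subtractf N_def)
  then have "uniform_entropy \<Omega> X - ln M = (\<Sum>\<omega>\<in>\<Omega>. ln (N / (M * fiber_card \<Omega> X \<omega>))) / N"
    using \<open>0 < N\<close> by (simp add: uniform_entropy_def N_def[symmetric] diff_divide_distrib)
  also have "\<dots> \<le> (\<Sum>\<omega>\<in>\<Omega>. N / (M * fiber_card \<Omega> X \<omega>) - 1) / N"
    using \<open>0 < N\<close> \<open>0 < M\<close> fiber by (intro divide_right_mono sum_mono ln_le_minus_one) auto
  also have "\<dots> = (N / M * (\<Sum>\<omega>\<in>\<Omega>. 1 / fiber_card \<Omega> X \<omega>) - N) / N"
    by (simp add: sum_subtractf sum_distrib_left N_def)
  also have "\<dots> = 0"
    using sum_inverse_fiber_card[OF assms(1), of X] \<open>0 < M\<close> by (simp add: M_def)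
  finally show ?thesis by (simp add: M_def)
qed

text \<open>The counting inequality behind submodularity: with \<open>ln t \<le> t - 1\<close> it yields
  \<open>H(X,Y,Z) + H(Z) \<le> H(X,Z) + H(Y,Z)\<close>.\<close>

lemma sum_fiber_ratio_le_card:
  fixes X :: "'a \<Rightarrow> 'b" and Y :: "'a \<Rightarrow> 'c" and Z :: "'a \<Rightarrow> 'd"
  assumes fin: "finite \<Omega>"
  defines "c \<omega> \<equiv> real (fiber_card \<Omega> (\<lambda>\<omega>. (X \<omega>, Y \<omega>, Z \<omega>)) \<omega>)"
    and "cZ \<omega> \<equiv> real (fiber_card \<Omega> Z \<omega>)"
  shows "(\<Sum>\<omega>\<in>\<Omega>. real (fiber_card \<Omega> (\<lambda>\<omega>. (X \<omega>, Z \<omega>)) \<omega>) * fiber_card \<Omega> (\<lambda>\<omega>. (Y \<omega>, Z \<omega>)) \<omega>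
            / (c \<omega> * cZ \<omega>)) \<le> card \<Omega>"
proof -
  \<comment> \<open>\<open>P a b \<omega>\<close>: the pair \<open>(a, b)\<close> is counted in the product of fibres at \<open>\<omega>\<close>\<close>
  define P where "P a b \<omega> \<longleftrightarrow> X a = X \<omega> \<and> Z a = Z \<omega> \<and> Y b = Y \<omega> \<and> Z b = Z \<omega>" for a b \<omega>
  have cZ_pos: "0 < cZ \<omega>" if "\<omega> \<in> \<Omega>" for \<omega>
    using fiber_card_pos[OF fin that] by (simp add: cZ_def)
  have product: "real (fiber_card \<Omega> (\<lambda>\<omega>. (X \<omega>, Z \<omega>)) \<omega>) * fiber_card \<Omega> (\<lambda>\<omega>. (Y \<omega>, Z \<omega>)) \<omega>
      = (\<Sum>a\<in>\<Omega>. \<Sum>b\<in>\<Omega>. if P a b \<omega> then 1 else 0)" for \<omega>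
    by (simp add: real_fiber_card[OF fin] sum_product P_def if_distrib[where f="\<lambda>x. x * _"]
        conj_assoc cong: if_cong) (intro sum.cong refl, auto)
  have inner: "(\<Sum>\<omega>\<in>\<Omega>. if P a b \<omega> then 1 / (c \<omega> * cZ \<omega>) else 0) \<le> (if Z a = Z b then 1 / cZ a else 0)"
    if "a \<in> \<Omega>" for a b
  proof (cases "Z a = Z b")
    case True
    \<comment> \<open>all \<open>\<omega>\<close> with \<open>P a b \<omega>\<close> share one \<open>(X, Y, Z)\<close>-fibre, of size \<open>card F\<close>\<close>
    define F where "F = {\<omega>\<in>\<Omega>. P a b \<omega>}"
    have fibres: "c \<omega> = card F" "cZ \<omega> = cZ a" if "\<omega> \<in> F" for \<omega>
      using that True unfolding c_def cZ_def fiber_card_def F_def P_def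
      by (auto intro!: arg_cong[where f=card])
    have "(\<Sum>\<omega>\<in>\<Omega>. if P a b \<omega> then 1 / (c \<omega> * cZ \<omega>) else 0) = (\<Sum>\<omega>\<in>F. 1 / (c \<omega> * cZ \<omega>))"
      using fin by (simp add: sum.inter_filter F_def)
    also have "\<dots> = (\<Sum>\<omega>\<in>F. 1 / (card F * cZ a))"
      using fibres by (intro sum.cong) auto
    also have "\<dots> = card F / (card F * cZ a)" by simp
    also have "\<dots> \<le> 1 / cZ a"
      using cZ_pos[OF that] by (cases "card F = 0") auto
    finally show ?thesis using True by simp
  next
    case False
    then have "\<not> P a b \<omega>" for \<omega> by (auto simp: P_def)
    then show ?thesis using False by simp
  qed
  have "(\<Sum>\<omega>\<in>\<Omega>. real (fiber_card \<Omega> (\<lambda>\<omega>. (X \<omega>, Z \<omega>)) \<omega>) * fiber_card \<Omega> (\<lambda>\<omega>. (Y \<omega>, Z \<omega>)) \<omega>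
            / (c \<omega> * cZ \<omega>))
      = (\<Sum>\<omega>\<in>\<Omega>. \<Sum>a\<in>\<Omega>. \<Sum>b\<in>\<Omega>. if P a b \<omega> then 1 / (c \<omega> * cZ \<omega>) else 0)"
    unfolding product sum_divide_distrib by (intro sum.cong refl) simp
  also have "\<dots> = (\<Sum>a\<in>\<Omega>. \<Sum>b\<in>\<Omega>. \<Sum>\<omega>\<in>\<Omega>. if P a b \<omega> then 1 / (c \<omega> * cZ \<omega>) else 0)"
    by (subst sum.swap) (intro sum.cong refl sum.swap)
  also have "\<dots> \<le> (\<Sum>a\<in>\<Omega>. \<Sum>b\<in>\<Omega>. if Z a = Z b then 1 / cZ a else 0)"
    using inner by (intro sum_mono) auto
  also have "\<dots> = (\<Sum>a\<in>\<Omega>. cZ a * (1 / cZ a))"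
  proof (rule sum.cong[OF refl])
    fix a
    show "(\<Sum>b\<in>\<Omega>. if Z a = Z b then 1 / cZ a else 0) = cZ a * (1 / cZ a)"
      unfolding cZ_def real_fiber_card[OF fin] sum_distrib_right by (intro sum.cong) auto
  qed
  also have "\<dots> = (\<Sum>a\<in>\<Omega>. 1)"
    using cZ_pos by (intro sum.cong) (auto simp: less_le)
  also have "\<dots> = card \<Omega>"
    by simp
  finally show ?thesis .
qed

lemma uniform_entropy_submodular:
  fixes X :: "'a \<Rightarrow> 'b" and Y :: "'a \<Rightarrow> 'c" and Z :: "'a \<Rightarrow> 'd"
  assumes fin: "finite \<Omega>"
  shows "uniform_entropy \<Omega> (\<lambda>\<omega>. (X \<omega>, Y \<omega>, Z \<omega>)) + uniform_entropy \<Omega> Z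
       \<le> uniform_entropy \<Omega> (\<lambda>\<omega>. (X \<omega>, Z \<omega>)) + uniform_entropy \<Omega> (\<lambda>\<omega>. (Y \<omega>, Z \<omega>))"
proof (cases "\<Omega> = {}")
  case False
  define N where "N = real (card \<Omega>)"
  define c1 where "c1 \<omega> = real (fiber_card \<Omega> (\<lambda>\<omega>. (X \<omega>, Y \<omega>, Z \<omega>)) \<omega>)" for \<omega>
  define c2 where "c2 \<omega> = real (fiber_card \<Omega> Z \<omega>)" for \<omega>
  define c3 where "c3 \<omega> = real (fiber_card \<Omega> (\<lambda>\<omega>. (X \<omega>, Z \<omega>)) \<omega>)" for \<omega>
  define c4 where "c4 \<omega> = real (fiber_card \<Omega> (\<lambda>\<omega>. (Y \<omega>, Z \<omega>)) \<omega>)" for \<omega>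
  have "0 < N" using fin False by (simp add: N_def card_gt_0_iff)
  have pos: "0 < c1 \<omega>" "0 < c2 \<omega>" "0 < c3 \<omega>" "0 < c4 \<omega>" if "\<omega> \<in> \<Omega>" for \<omega>
    using fiber_card_pos[OF fin that] by (simp_all add: c1_def c2_def c3_def c4_def)
  have "uniform_entropy \<Omega> (\<lambda>\<omega>. (X \<omega>, Y \<omega>, Z \<omega>)) + uniform_entropy \<Omega> Z
      - uniform_entropy \<Omega> (\<lambda>\<omega>. (X \<omega>, Z \<omega>)) - uniform_entropy \<Omega> (\<lambda>\<omega>. (Y \<omega>, Z \<omega>))
      = (\<Sum>\<omega>\<in>\<Omega>. ln ((c3 \<omega> * c4 \<omega>) / (c1 \<omega> * c2 \<omega>))) / N"
  proof -
    have "ln (N / c1 \<omega>) + ln (N / c2 \<omega>) - ln (N / c3 \<omega>) - ln (N / c4 \<omega>) = ln ((c3 \<omega> * c4 \<omega>) / (c1 \<omega> * c2 \<omega>))"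
      if "\<omega> \<in> \<Omega>" for \<omega>
      using pos[OF that] \<open>0 < N\<close> by (simp add: ln_div ln_mult)
    then have "(\<Sum>\<omega>\<in>\<Omega>. ln ((c3 \<omega> * c4 \<omega>) / (c1 \<omega> * c2 \<omega>)))
        = (\<Sum>\<omega>\<in>\<Omega>. ln (N / c1 \<omega>)) + (\<Sum>\<omega>\<in>\<Omega>. ln (N / c2 \<omega>))
          - (\<Sum>\<omega>\<in>\<Omega>. ln (N / c3 \<omega>)) - (\<Sum>\<omega>\<in>\<Omega>. ln (N / c4 \<omega>))"
      by (simp add: sum.distrib[symmetric] sum_subtractf[symmetric])
    then show ?thesis
      unfolding uniform_entropy_def N_def[symmetric] c1_def[symmetric] c2_def[symmetric]
        c3_def[symmetric] c4_def[symmetric]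
      by (simp add: add_divide_distrib diff_divide_distrib)
  qed
  also have "\<dots> \<le> (\<Sum>\<omega>\<in>\<Omega>. (c3 \<omega> * c4 \<omega>) / (c1 \<omega> * c2 \<omega>) - 1) / N"
    using \<open>0 < N\<close> pos by (intro divide_right_mono sum_mono ln_le_minus_one) auto
  also have "\<dots> \<le> 0"
    using sum_fiber_ratio_le_card[OF fin, where X=X and Y=Y and Z=Z] \<open>0 < N\<close>
    by (simp add: sum_subtractf N_def c1_def c2_def c3_def c4_def divide_nonpos_pos)
  finally show ?thesis by simp
qed (simp add: uniform_entropy_def)

definition joint_entropy :: "'a set \<Rightarrow> ('a \<Rightarrow> 'u \<Rightarrow> 'v) \<Rightarrow> 'u set \<Rightarrow> real" where
  "joint_entropy \<Omega> val U = uniform_entropy \<Omega> (\<lambda>\<omega>. restrict (val \<omega>) U)"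

lemma restrict_eq_restrict_iff: "restrict f U = restrict g U \<longleftrightarrow> (\<forall>x\<in>U. f x = g x)"
  by (auto simp: restrict_def fun_eq_iff)

lemma joint_entropy_mono:
  "finite \<Omega> \<Longrightarrow> U \<subseteq> V \<Longrightarrow> joint_entropy \<Omega> val U \<le> joint_entropy \<Omega> val V"
  unfolding joint_entropy_def
  by (intro uniform_entropy_le_if_determined) (auto simp: restrict_eq_restrict_iff)

lemma joint_entropy_nonneg: "finite \<Omega> \<Longrightarrow> 0 \<le> joint_entropy \<Omega> val U"
  unfolding joint_entropy_def by (rule uniform_entropy_nonneg)

lemma joint_entropy_empty: "joint_entropy \<Omega> val {} = 0"
proof -
  have "(\<lambda>\<omega>. restrict (val \<omega>) {}) = (\<lambda>_. \<lambda>_. undefined)" by (simp add: fun_eq_iff)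
  then show ?thesis by (simp add: joint_entropy_def uniform_entropy_const)
qed

lemma joint_entropy_submodular:
  assumes "finite \<Omega>"
  shows "joint_entropy \<Omega> val (U \<union> V) + joint_entropy \<Omega> val (U \<inter> V)
       \<le> joint_entropy \<Omega> val U + joint_entropy \<Omega> val V"
proof -
  let ?X = "\<lambda>\<omega>. restrict (val \<omega>) U" and ?Y = "\<lambda>\<omega>. restrict (val \<omega>) V"
    and ?Z = "\<lambda>\<omega>. restrict (val \<omega>) (U \<inter> V)"
  have "uniform_entropy \<Omega> (\<lambda>\<omega>. (?X \<omega>, ?Y \<omega>, ?Z \<omega>)) = joint_entropy \<Omega> val (U \<union> V)"
    "uniform_entropy \<Omega> (\<lambda>\<omega>. (?X \<omega>, ?Z \<omega>)) = joint_entropy \<Omega> val U"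
    "uniform_entropy \<Omega> (\<lambda>\<omega>. (?Y \<omega>, ?Z \<omega>)) = joint_entropy \<Omega> val V"
    unfolding joint_entropy_def by (auto intro!: uniform_entropy_cong simp: restrict_eq_restrict_iff)
  then show ?thesis
    using uniform_entropy_submodular[OF assms, of ?X ?Y ?Z] by (simp add: joint_entropy_def)
qed

lemma joint_entropy_subadditive:
  "finite \<Omega> \<Longrightarrow> joint_entropy \<Omega> val (U \<union> V) \<le> joint_entropy \<Omega> val U + joint_entropy \<Omega> val V"
  using joint_entropy_submodular[of \<Omega> val U V] joint_entropy_nonneg[of \<Omega> val "U \<inter> V"] by linarith

lemma joint_entropy_UN_le:
  assumes "finite \<Omega>" "finite T" "\<And>t. t \<in> T \<Longrightarrow> joint_entropy \<Omega> val (F t) \<le> b t"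
  shows "joint_entropy \<Omega> val (\<Union>t\<in>T. F t) \<le> (\<Sum>t\<in>T. b t)"
  using assms(2,3)
proof (induction T rule: finite_induct)
  case (insert t T)
  have "joint_entropy \<Omega> val (F t \<union> (\<Union>t\<in>T. F t)) \<le> joint_entropy \<Omega> val (F t) + joint_entropy \<Omega> val (\<Union>t\<in>T. F t)"
    by (rule joint_entropy_subadditive[OF assms(1)])
  also have "\<dots> \<le> b t + (\<Sum>t\<in>T. b t)" using insert by (intro add_mono) auto
  finally show ?case using insert by simp
qed (simp add: joint_entropy_empty)

lemma joint_entropy_determined:
  assumes "\<And>\<omega> \<omega>'. \<omega> \<in> \<Omega> \<Longrightarrow> \<omega>' \<in> \<Omega> \<Longrightarrow> \<forall>u\<in>U. val \<omega> u = val \<omega>' u \<Longrightarrow> \<forall>u\<in>V. val \<omega> u = val \<omega>' u"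
  shows "joint_entropy \<Omega> val (U \<union> V) = joint_entropy \<Omega> val U"
  unfolding joint_entropy_def
proof (rule uniform_entropy_cong)
  fix \<omega> \<omega>' assume "\<omega> \<in> \<Omega>" "\<omega>' \<in> \<Omega>"
  then show "restrict (val \<omega>) (U \<union> V) = restrict (val \<omega>') (U \<union> V)
      \<longleftrightarrow> restrict (val \<omega>) U = restrict (val \<omega>') U"
    using assms[of \<omega> \<omega>'] unfolding restrict_eq_restrict_iff by blast
qed

lemma joint_entropy_le_ln_card:
  assumes "finite \<Omega>" "\<Omega> \<noteq> {}"
  shows "joint_entropy \<Omega> val U \<le> ln (card ((\<lambda>\<omega>. restrict (val \<omega>) U) ` \<Omega>))"
  unfolding joint_entropy_def using assms by (rule uniform_entropy_le_ln_card_image)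

section \<open>Converse\<close>

definition decoded_tuples :: "nat \<Rightarrow> real^'n \<Rightarrow> 'k set \<Rightarrow> ('k \<Rightarrow> 'n set) \<Rightarrow> ('n \<Rightarrow> 'n set)
    \<Rightarrow> ('k \<Rightarrow> ('n \<Rightarrow> nat) \<Rightarrow> nat) \<Rightarrow> ('n \<Rightarrow> ('k \<Rightarrow> nat) \<Rightarrow> ('n \<Rightarrow> nat) \<Rightarrow> nat) \<Rightarrow> ('n \<Rightarrow> nat) set"
  where
  "decoded_tuples n R K S A f g =
     {m \<in> msg_tuples n R. \<forall>j. g j (sent K S f m) (restrict m (A j)) = m j}"

text \<open>The messages (\<open>Inl j\<close>) and the transmitted indices (\<open>Inr k\<close>) as one family of
  random variables of the message tuple.\<close>

definition code_vars :: "'k set \<Rightarrow> ('k \<Rightarrow> 'n set) \<Rightarrow> ('k \<Rightarrow> ('n \<Rightarrow> nat) \<Rightarrow> nat) \<Rightarrow> ('n \<Rightarrow> nat)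
    \<Rightarrow> 'n + 'k \<Rightarrow> nat" where
  "code_vars K S f m x = (case x of Inl j \<Rightarrow> m j | Inr k \<Rightarrow> sent K S f m k)"

lemma finite_msg_tuples: "finite (msg_tuples n (R :: real^'n::finite))"
  by (simp add: msg_tuples_def msg_set_def finite_PiE)

lemma ln_card_msg_tuples:
  "ln (card (msg_tuples n (R :: real^'n::finite))) = (\<Sum>j\<in>UNIV. ln (card (msg_set n R j)))"
  by (simp add: msg_tuples_def card_PiE ln_prod msg_set_def)

lemma ln_card_msg_set: "ln (card (msg_set n R j)) = nat \<lceil>real n * R $ j\<rceil> * ln 2"
  by (simp add: msg_set_def ln_realpow)

lemma ln_card_link_set: "ln (card (link_set n c)) = nat \<lfloor>real n * c\<rfloor> * ln 2"
  by (simp add: link_set_def ln_realpow)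

locale decodable_code =
  fixes n :: nat and R :: "real^'n::finite" and K :: "'k set" and S C A f g
  assumes finite_K: "finite K" and valid: "valid_encoders n R K S C f"
    and decodes: "decoded_tuples n R K S A f g \<noteq> {}"
begin

abbreviation "D \<equiv> decoded_tuples n R K S A f g"
abbreviation "H \<equiv> joint_entropy D (code_vars K S f)"

lemma finite_decoded: "finite D"
  by (rule finite_subset[OF _ finite_msg_tuples]) (auto simp: decoded_tuples_def)

lemma entropy_le_ln_card_range:
  assumes "\<And>m. m \<in> D \<Longrightarrow> code_vars K S f m x \<in> B" "finite B"
  shows "H {x} \<le> ln (card B)"
proof -
  let ?\<phi> = "\<lambda>v. restrict (\<lambda>_. v) {x}"
  have "(\<lambda>m. restrict (code_vars K S f m) {x}) ` D \<subseteq> ?\<phi> ` B"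
    using assms(1) by (auto simp: image_iff fun_eq_iff)
  then have "card ((\<lambda>m. restrict (code_vars K S f m) {x}) ` D) \<le> card B"
    using assms(2) by (meson card_image_le card_mono finite_imageI le_trans)
  moreover have "0 < card ((\<lambda>m. restrict (code_vars K S f m) {x}) ` D)"
    using decodes finite_decoded by (simp add: card_gt_0_iff)
  moreover have "H {x} \<le> ln (card ((\<lambda>m. restrict (code_vars K S f m) {x}) ` D))"
    by (rule joint_entropy_le_ln_card[OF finite_decoded decodes])
  ultimately show ?thesis by (smt (verit) ln_le_cancel_iff of_nat_0_less_iff of_nat_le_iff)
qed

lemma entropy_link_le: "k \<in> K \<Longrightarrow> H {Inr k} \<le> ln (card (link_set n (C k)))"
  using valid by (intro entropy_le_ln_card_range)
    (auto simp: code_vars_def sent_def valid_encoders_def decoded_tuples_def link_set_def)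

lemma entropy_message_le: "H {Inl j} \<le> ln (card (msg_set n R j))"
  by (intro entropy_le_ln_card_range)
    (auto simp: code_vars_def decoded_tuples_def msg_tuples_def msg_set_def)

lemma entropy_messages: "H (Inl ` UNIV) = ln (card D)"
  unfolding joint_entropy_def
  by (rule uniform_entropy_inj) (auto simp: inj_on_def restrict_eq_restrict_iff code_vars_def)

lemma entropy_messages_le: "H (Inl ` J) \<le> (\<Sum>j\<in>J. ln (card (msg_set n R j)))"
proof -
  have "H (\<Union>j\<in>J. {Inl j}) \<le> (\<Sum>j\<in>J. ln (card (msg_set n R j)))"
    by (intro joint_entropy_UN_le finite_decoded entropy_message_le) simp
  then show ?thesis by (simp add: UNION_singleton_eq_range)
qed

lemma entropy_links_le:
  "T \<subseteq> K \<Longrightarrow> H (Inr ` T) \<le> (\<Sum>k\<in>T. ln (card (link_set n (C k))))"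
proof -
  assume "T \<subseteq> K"
  then have "H (\<Union>k\<in>T. {Inr k}) \<le> (\<Sum>k\<in>T. ln (card (link_set n (C k))))"
    using finite_K by (intro joint_entropy_UN_le finite_decoded entropy_link_le)
      (auto intro: finite_subset)
  then show ?thesis by (simp add: UNION_singleton_eq_range)
qed

lemma entropy_add_decoded:
  assumes "Inl ` A j \<union> Inr ` K \<subseteq> U"
  shows "H (U \<union> {Inl j}) = H U"
proof (rule joint_entropy_determined)
  fix m m' assume m: "m \<in> D" "m' \<in> D" and eq: "\<forall>x\<in>U. code_vars K S f m x = code_vars K S f m' x"
  have "sent K S f m k = sent K S f m' k" for k
  proof (cases "k \<in> K")
    case True
    then show ?thesis using eq assms by (force simp: code_vars_def)
  qed (simp add: sent_def)
  then have "sent K S f m = sent K S f m'" by blast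
  moreover have "m i = m' i" if "i \<in> A j" for i
    using eq assms that by (force simp: code_vars_def)
  then have "restrict m (A j) = restrict m' (A j)"
    by (simp add: restrict_eq_restrict_iff)
  ultimately have "m j = m' j" using m by (simp add: decoded_tuples_def) metis
  then show "\<forall>x\<in>{Inl j}. code_vars K S f m x = code_vars K S f m' x"
    by (simp add: code_vars_def)
qed

lemma entropy_decode_message:
  assumes "A j \<subseteq> J"
  shows "H (Inl ` insert j J \<union> Inr ` K) = H (Inl ` J \<union> Inr ` K)"
proof -
  have "Inl ` insert j J \<union> Inr ` K = (Inl ` J \<union> Inr ` K) \<union> {Inl j}" by auto
  also have "H \<dots> = H (Inl ` J \<union> Inr ` K)"
    by (rule entropy_add_decoded) (use assms in auto)
  finally show ?thesis .
qed

lemma entropy_add_links: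
  assumes "\<And>k. k \<in> T \<Longrightarrow> Inl ` S k \<subseteq> U"
  shows "H (U \<union> Inr ` T) = H U"
proof (rule joint_entropy_determined)
  fix m m' assume eq: "\<forall>x\<in>U. code_vars K S f m x = code_vars K S f m' x"
  have "m i = m' i" if "k \<in> T" "i \<in> S k" for k i
    using eq assms[OF that(1)] that(2) by (force simp: code_vars_def)
  then have "restrict m (S k) = restrict m' (S k)" if "k \<in> T" for k
    using that by (simp add: restrict_eq_restrict_iff)
  then show "\<forall>x\<in>Inr ` T. code_vars K S f m x = code_vars K S f m' x"
    by (auto simp: code_vars_def sent_def)
qed

text \<open>Cut-set bound: if all messages can be decoded from those in \<open>J\<close> and all transmissions,
  only the senders knowing a message outside \<open>J\<close> convey information.\<close>

lemma cut_set_bound: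
  assumes "H (Inl ` J \<union> Inr ` K) = H (Inl ` UNIV \<union> Inr ` K)"
  shows "ln (card D) \<le> (\<Sum>j\<in>J. ln (card (msg_set n R j)))
           + (\<Sum>k\<in>{k\<in>K. \<not> S k \<subseteq> J}. ln (card (link_set n (C k))))"
proof -
  have "ln (card D) \<le> H (Inl ` UNIV \<union> Inr ` K)"
    unfolding entropy_messages[symmetric] by (rule joint_entropy_mono[OF finite_decoded]) auto
  also have "\<dots> = H (Inl ` J \<union> Inr ` K)"
    using assms by simp
  also have "\<dots> = H ((Inl ` J \<union> Inr ` {k\<in>K. S k \<subseteq> J}) \<union> Inr ` {k\<in>K. \<not> S k \<subseteq> J})"
    by (rule arg_cong[where f=H]) auto
  also have "\<dots> \<le> H (Inl ` J \<union> Inr ` {k\<in>K. S k \<subseteq> J}) + H (Inr ` {k\<in>K. \<not> S k \<subseteq> J})"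
    by (rule joint_entropy_subadditive[OF finite_decoded])
  also have "H (Inl ` J \<union> Inr ` {k\<in>K. S k \<subseteq> J}) = H (Inl ` J)"
    by (rule entropy_add_links) auto
  finally show ?thesis
    using entropy_messages_le[of J] entropy_links_le[of "{k\<in>K. \<not> S k \<subseteq> J}"] by auto
qed

end

lemma decoded_tuples_large:
  fixes R :: "real^'n::finite"
  assumes "error_prob n R K S A f g < 1/2"
  shows "2 * card (decoded_tuples n R K S A f g) > card (msg_tuples n R)"
proof -
  define E where "E = {m \<in> msg_tuples n R. \<exists>j. g j (sent K S f m) (restrict m (A j)) \<noteq> m j}"
  have "msg_tuples n R = E \<union> decoded_tuples n R K S A f g" "E \<inter> decoded_tuples n R K S A f g = {}"
    by (auto simp: E_def decoded_tuples_def)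
  then have split: "card (msg_tuples n R) = card E + card (decoded_tuples n R K S A f g)"
    using finite_msg_tuples by (metis card_Un_disjoint finite_Un)
  have "0 < card (msg_tuples n R)"
    using finite_msg_tuples by (simp add: card_gt_0_iff msg_tuples_def msg_set_def PiE_eq_empty_iff)
  moreover have "card E / card (msg_tuples n R) < 1/2"
    using assms by (simp add: error_prob_def E_def)
  ultimately have "real (2 * card E) < real (card (msg_tuples n R))"
    by (simp add: field_simps)
  then show ?thesis
    using split by linarith
qed

lemma le_of_eventually_mult_le:
  fixes x b d :: real
  assumes "\<forall>\<^sub>F n in sequentially. real n * x \<le> real n * b + d"
  shows "x \<le> b"
proof (rule tendsto_le[OF trivial_limit_sequentially])
  show "(\<lambda>n. b + d / real n) \<longlonglongrightarrow> b"
    using tendsto_add[OF tendsto_const lim_const_over_n] by simp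
  show "\<forall>\<^sub>F n in sequentially. x \<le> b + d / real n"
    using assms eventually_gt_at_top[of 0]
    by eventually_elim (simp add: field_simps mult.commute)
qed (rule tendsto_const)

lemma rate_sum_le_of_code:
  fixes R :: "real^'n::finite" and K :: "'k set" and \<alpha> c :: real and \<beta> :: "'n \<Rightarrow> real"
  assumes "error_prob n R K S A f g < 1/2" "0 \<le> \<alpha>"
    and bound: "decoded_tuples n R K S A f g \<noteq> {} \<Longrightarrow>
       \<alpha> * ln (card (decoded_tuples n R K S A f g))
         \<le> (\<Sum>j\<in>UNIV. \<beta> j * ln (card (msg_set n R j))) + c * n * ln 2"
  shows "(\<Sum>j\<in>UNIV. (\<alpha> - \<beta> j) * nat \<lceil>real n * R $ j\<rceil>) \<le> real n * c + \<alpha>"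
proof -
  define D where "D = decoded_tuples n R K S A f g"
  define a where "a j = real (nat \<lceil>real n * R $ j\<rceil>)" for j
  have large: "card (msg_tuples n R) < 2 * card D"
    using decoded_tuples_large[OF assms(1)] by (simp add: D_def)
  then have "D \<noteq> {}" by auto
  have "0 < card (msg_tuples n R)"
    using finite_msg_tuples by (simp add: card_gt_0_iff msg_tuples_def msg_set_def PiE_eq_empty_iff)
  then have "ln (card (msg_tuples n R)) \<le> ln (2 * card D)"
    using large by (simp del: of_nat_mult add: of_nat_mult[symmetric])
  also have "\<dots> = ln 2 + ln (card D)"
    using large by (simp add: ln_mult)
  finally have "(\<Sum>j\<in>UNIV. a j) * ln 2 - ln 2 \<le> ln (card D)"
    by (simp add: ln_card_msg_tuples ln_card_msg_set a_def sum_distrib_right)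
  then have "\<alpha> * ((\<Sum>j\<in>UNIV. a j) * ln 2 - ln 2) \<le> \<alpha> * ln (card D)"
    using \<open>0 \<le> \<alpha>\<close> by (rule mult_left_mono)
  also have "\<dots> \<le> (\<Sum>j\<in>UNIV. \<beta> j * (a j * ln 2)) + c * n * ln 2"
    using bound \<open>D \<noteq> {}\<close> unfolding D_def ln_card_msg_set a_def by blast
  finally have "(\<Sum>j\<in>UNIV. (\<alpha> - \<beta> j) * a j) * ln 2 \<le> (real n * c + \<alpha>) * ln 2"
    by (simp add: algebra_simps sum_subtractf sum_distrib_left sum_distrib_right)
  then show ?thesis by (simp add: a_def)
qed

lemma achievable_rate_bound:
  fixes R :: "real^'n::finite" and K :: "'k set"
  assumes "achievable K S C A R" and "0 \<le> \<alpha>" "\<And>j. \<beta> j \<le> \<alpha>"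
    and bound: "\<And>n f g. valid_encoders n R K S C f \<Longrightarrow> decoded_tuples n R K S A f g \<noteq> {} \<Longrightarrow>
       \<alpha> * ln (card (decoded_tuples n R K S A f g))
         \<le> (\<Sum>j\<in>UNIV. \<beta> j * ln (card (msg_set n R j))) + c * n * ln 2"
  shows "(\<Sum>j\<in>UNIV. (\<alpha> - \<beta> j) * R $ j) \<le> c"
proof (rule le_of_eventually_mult_le)
  obtain F G where valid: "\<And>n. valid_encoders n R K S C (F n)"
    and err: "(\<lambda>n. error_prob n R K S A (F n) (G n)) \<longlonglongrightarrow> 0"
    using assms(1) unfolding achievable_def by blast
  have "\<forall>\<^sub>F n in sequentially. error_prob n R K S A (F n) (G n) < 1/2"
    using order_tendstoD(2)[OF err, of "1/2"] by simp
  then show "\<forall>\<^sub>F n in sequentially. real n * (\<Sum>j\<in>UNIV. (\<alpha> - \<beta> j) * R $ j) \<le> real n * c + \<alpha>"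
  proof eventually_elim
    case (elim n)
    have "real n * (\<Sum>j\<in>UNIV. (\<alpha> - \<beta> j) * R $ j) \<le> (\<Sum>j\<in>UNIV. (\<alpha> - \<beta> j) * nat \<lceil>real n * R $ j\<rceil>)"
      unfolding sum_distrib_left
    proof (intro sum_mono)
      show "real n * ((\<alpha> - \<beta> j) * R $ j) \<le> (\<alpha> - \<beta> j) * nat \<lceil>real n * R $ j\<rceil>" for j
        using assms(3)[of j] mult_left_mono[of "real n * R $ j" "nat \<lceil>real n * R $ j\<rceil>" "\<alpha> - \<beta> j"]
        by (simp add: algebra_simps) linarith
    qed
    also have "\<dots> \<le> real n * c + \<alpha>"
      using elim \<open>0 \<le> \<alpha>\<close> bound[OF valid] by (rule rate_sum_le_of_code)
    finally show ?case .
  qed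
qed

lemma Inl_image_subset_124: "3 \<notin> k \<Longrightarrow> Inl ` k \<subseteq> Inl ` {1, 2, 4::4}"
  using UNIV_4 by blast

lemma Inl_image_subset_134: "2 \<notin> k \<Longrightarrow> Inl ` k \<subseteq> Inl ` {1, 3, 4::4}"
  using UNIV_4 by blast

lemma card_senders_not_subset: "card {k \<in> senders. \<not> k \<subseteq> J} = 16 - 2 ^ card J"
proof -
  have "{k \<in> senders. \<not> k \<subseteq> J} = UNIV - Pow J" by (auto simp: senders_def)
  moreover have "card (UNIV :: 4 set set) = 16" by (simp add: card_UNIV_set)
  ultimately show ?thesis by (simp add: card_Diff_subset card_Pow)
qed

lemma card_senders_23: "card {k \<in> senders. 2 \<in> k \<and> 3 \<in> k} \<le> 4"
proof -
  have "{k \<in> senders. 2 \<in> k \<and> 3 \<in> k} \<subseteq> (\<lambda>s. s \<union> {2, 3}) ` Pow {1, 4}"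
  proof
    fix k assume "k \<in> {k \<in> senders. 2 \<in> k \<and> 3 \<in> k}"
    then have "k = (k - {2, 3}) \<union> {2, 3}" by auto
    moreover have "k - {2, 3} \<in> Pow {1, 4}" using UNIV_4 by blast
    ultimately show "k \<in> (\<lambda>s. s \<union> {2, 3}) ` Pow {1, 4}" by (rule image_eqI)
  qed
  then have "card {k \<in> senders. 2 \<in> k \<and> 3 \<in> k} \<le> card ((\<lambda>s. s \<union> {2, 3}) ` Pow {1, 4::4})"
    by (intro card_mono) auto
  also have "\<dots> \<le> card (Pow {1, 4::4})"
    by (rule card_image_le) simp
  also have "\<dots> = 4"
    by (simp add: card_Pow)
  finally show ?thesis .
qed

lemma card_senders_not_4: "card (senders - {{4}}) = 14"
proof -
  have "senders - {{4}} = UNIV - {{}, {4}}" by (auto simp: senders_def)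
  moreover have "card (UNIV :: 4 set set) = 16" by (simp add: card_UNIV_set)
  ultimately show ?thesis by (simp add: card_Diff_subset)
qed

text \<open>The sender sets are written \<open>\<lambda>k. k\<close> rather than \<open>id\<close> so that the facts inherited from
  \<open>decodable_code\<close> and its abbreviations match syntactically; \<open>instance_codeI\<close> converts.\<close>

locale instance_code = decodable_code n R senders "\<lambda>k. k" "\<lambda>_. 1" side_info f g for n R f g
begin

lemma entropy_link_set_le: "T \<subseteq> senders \<Longrightarrow> H (Inr ` T) \<le> card T * (n * ln 2)"
  using entropy_links_le[of T] by (simp add: ln_card_link_set)

lemma entropy_submodular_eq:
  "U \<union> V = A \<Longrightarrow> U \<inter> V = B \<Longrightarrow> H A + H B \<le> H U + H V"
  using joint_entropy_submodular[OF finite_decoded] by blast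

lemma entropy_subadditive_eq: "U \<union> V = A \<Longrightarrow> H A \<le> H U + H V"
  using joint_entropy_subadditive[OF finite_decoded] by blast

lemma entropy_all: "H (range Inl \<union> Inr ` senders) = ln (card D)"
  using entropy_add_links[of senders "Inl ` UNIV"] entropy_messages by auto

lemma entropy_cut_bound:
  assumes "H (Inl ` J \<union> Inr ` senders) = ln (card D)"
  shows "ln (card D) \<le> (\<Sum>j\<in>J. ln (card (msg_set n R j))) + real (16 - 2 ^ card J) * (n * ln 2)"
  using cut_set_bound[of J] assms entropy_all card_senders_not_subset[of J]
  by (simp add: ln_card_link_set)

lemma entropy_bound_single: "ln (card D) \<le> (\<Sum>i\<in>-{j}. ln (card (msg_set n R i))) + 8 * (n * ln 2)"
proof -
  have "side_info j \<subseteq> -{j}" by (cases j rule: UNIV_4_cases) (auto simp: side_info_def)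
  then have "H (Inl ` (-{j}) \<union> Inr ` senders) = H (Inl ` insert j (-{j}) \<union> Inr ` senders)"
    by (rule entropy_decode_message[symmetric])
  also have "insert j (-{j}) = UNIV" by auto
  finally have "H (Inl ` (-{j}) \<union> Inr ` senders) = ln (card D)" by (simp add: entropy_all)
  moreover have "card (-{j}) = 3" by (simp add: Compl_eq_Diff_UNIV card_Diff_singleton)
  ultimately show ?thesis using entropy_cut_bound[of "-{j}"] by simp
qed

lemma entropy_bound_pair:
  assumes "side_info p \<subseteq> J" "side_info q \<subseteq> insert p J" "insert q (insert p J) = UNIV" "card J = 2"
  shows "ln (card D) \<le> (\<Sum>j\<in>J. ln (card (msg_set n R j))) + 12 * (n * ln 2)"
proof -
  have "H (Inl ` J \<union> Inr ` senders) = H (Inl ` insert p J \<union> Inr ` senders)"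
    using assms(1) by (rule entropy_decode_message[symmetric])
  also have "\<dots> = H (Inl ` insert q (insert p J) \<union> Inr ` senders)"
    using assms(2) by (rule entropy_decode_message[symmetric])
  finally have "H (Inl ` J \<union> Inr ` senders) = ln (card D)" by (simp add: assms(3) entropy_all)
  then show ?thesis using entropy_cut_bound[of J] assms(4) by simp
qed

text \<open>The bound \<open>R\<^sub>1 + R\<^sub>2 + R\<^sub>3 \<le> 18\<close> is not a cut-set bound: it adds the two decoding chains
  that start by recovering message 3 (from messages 1, 2, 4) and message 2 (from 1, 3, 4), and
  couples them through submodularity at the messages 1 and 4.  The senders are grouped by which
  of the messages 2 and 3 they know.\<close>

abbreviation "Y2 \<equiv> Inr ` {k \<in> senders. 2 \<in> k \<and> 3 \<notin> k}"
abbreviation "Y3 \<equiv> Inr ` {k \<in> senders. 3 \<in> k \<and> 2 \<notin> k}"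
abbreviation "Y23 \<equiv> Inr ` {k \<in> senders. 2 \<in> k \<and> 3 \<in> k}"

lemma entropy_decode_3_first:
  "ln (card D) + H (Inl ` {1,4}) + H (Inl ` {1,4} \<union> Y2 \<union> Y3)
     \<le> H (Inl ` {1,2,4}) + H (Inl ` {1,4} \<union> Y3) + H (Inl ` {1,4} \<union> Y2 \<union> Y3 \<union> Y23)"
proof -
  have "H (Inl ` {1,2,4} \<union> Inr ` senders) = H (Inl ` insert 3 {1,2,4} \<union> Inr ` senders)"
    by (rule entropy_decode_message[symmetric]) (auto simp: side_info_def)
  also have "insert 3 {1,2,4} = (UNIV :: 4 set)" using UNIV_4 by blast
  finally have "ln (card D) = H (Inl ` {1,2,4} \<union> Inr ` senders)" by (simp add: entropy_all)
  \<comment> \<open>a sender's index is determined by the messages once it misses message 3\<close>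
  also have "\<dots> = H ((Inl ` {1,2,4} \<union> Y3 \<union> Y23) \<union> Inr ` {k\<in>senders. 3 \<notin> k})"
    by (rule arg_cong[where f=H]) auto
  also have "\<dots> = H (Inl ` {1,2,4} \<union> Y3 \<union> Y23)"
    by (rule entropy_add_links) (use Inl_image_subset_124 in blast)
  finally have "ln (card D) = H (Inl ` {1,2,4} \<union> Y3 \<union> Y23)" .
  moreover have "H (Inl ` {1,2,4} \<union> Y3 \<union> Y23 \<union> Y2) = H (Inl ` {1,2,4} \<union> Y3 \<union> Y23)"
    "H (Inl ` {1,2,4} \<union> Y3 \<union> Y2) = H (Inl ` {1,2,4} \<union> Y3)"
    by (rule entropy_add_links; use Inl_image_subset_124 in blast)+
  moreover have "H (Inl ` {1,2,4} \<union> Y3 \<union> Y23 \<union> Y2) + H (Inl ` {1,4} \<union> Y2 \<union> Y3)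
      \<le> H (Inl ` {1,2,4} \<union> Y3 \<union> Y2) + H (Inl ` {1,4} \<union> Y2 \<union> Y3 \<union> Y23)"
    by (rule entropy_submodular_eq) auto
  moreover have "H (Inl ` {1,2,4} \<union> Y3) + H (Inl ` {1,4}) \<le> H (Inl ` {1,2,4}) + H (Inl ` {1,4} \<union> Y3)"
    by (rule entropy_submodular_eq) auto
  ultimately show ?thesis by linarith
qed

lemma entropy_decode_2_first:
  "ln (card D) + H (Inl ` {1,4} \<union> Y3) \<le> H (Inl ` {1,3,4}) + H (Inl ` {1,4} \<union> Y2 \<union> Y3) + H Y23"
proof -
  have "H (Inl ` {1,3,4} \<union> Inr ` senders) = H (Inl ` insert 2 {1,3,4} \<union> Inr ` senders)"
    by (rule entropy_decode_message[symmetric]) (auto simp: side_info_def)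
  also have "insert 2 {1,3,4} = (UNIV :: 4 set)" using UNIV_4 by blast
  finally have "ln (card D) = H (Inl ` {1,3,4} \<union> Inr ` senders)" by (simp add: entropy_all)
  also have "\<dots> = H ((Inl ` {1,3,4} \<union> Y2 \<union> Y23) \<union> Inr ` {k\<in>senders. 2 \<notin> k})"
    by (rule arg_cong[where f=H]) auto
  also have "\<dots> = H (Inl ` {1,3,4} \<union> Y2 \<union> Y23)"
    by (rule entropy_add_links) (use Inl_image_subset_134 in blast)
  also have "\<dots> \<le> H (Inl ` {1,3,4} \<union> Y2) + H Y23"
    by (rule entropy_subadditive_eq) auto
  finally have "ln (card D) \<le> H (Inl ` {1,3,4} \<union> Y2) + H Y23" .
  moreover have "H (Inl ` {1,3,4} \<union> Y2 \<union> Y3) = H (Inl ` {1,3,4} \<union> Y2)"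
    "H (Inl ` {1,3,4} \<union> Y3) = H (Inl ` {1,3,4})"
    by (rule entropy_add_links; use Inl_image_subset_134 in blast)+
  moreover have "H (Inl ` {1,3,4} \<union> Y2 \<union> Y3) + H (Inl ` {1,4} \<union> Y3)
      \<le> H (Inl ` {1,3,4} \<union> Y3) + H (Inl ` {1,4} \<union> Y2 \<union> Y3)"
    by (rule entropy_submodular_eq) auto
  ultimately show ?thesis by linarith
qed

lemma entropy_bound_triple:
  "2 * ln (card D) \<le> ln (card (msg_set n R 1)) + ln (card (msg_set n R 2))
     + ln (card (msg_set n R 3)) + 2 * ln (card (msg_set n R 4)) + 18 * (n * ln 2)"
proof -
  have "H (Inl ` {1,4} \<union> Y2 \<union> Y3 \<union> Y23) \<le> H (Inl ` {1,4} \<union> Inr ` senders)"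
    by (rule joint_entropy_mono[OF finite_decoded]) auto
  also have "\<dots> = H (Inl ` {4} \<union> Inr ` senders)"
    by (rule entropy_decode_message) (auto simp: side_info_def)
  also have "\<dots> \<le> H (Inl ` {4} \<union> Inr ` {{4}}) + H (Inr ` (senders - {{4}}))"
    by (rule entropy_subadditive_eq) (auto simp: senders_def)
  finally have "H (Inl ` {1,4} \<union> Y2 \<union> Y3 \<union> Y23)
      \<le> H (Inl ` {4} \<union> Inr ` {{4}}) + H (Inr ` (senders - {{4}}))" .
  moreover have "H (Inl ` {4} \<union> Inr ` {{4}}) = H (Inl ` {4})"
    by (rule entropy_add_links) auto
  moreover have "H (Inr ` (senders - {{4}})) \<le> 14 * (n * ln 2)"
    using entropy_link_set_le[of "senders - {{4}}"] card_senders_not_4 by simp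
  moreover have "real (card {k\<in>senders. 2 \<in> k \<and> 3 \<in> k}) * (n * ln 2) \<le> 4 * (n * ln 2)"
    using card_senders_23 by (intro mult_right_mono) auto
  then have "H Y23 \<le> 4 * (n * ln 2)"
    using entropy_link_set_le[of "{k\<in>senders. 2 \<in> k \<and> 3 \<in> k}"] by simp
  moreover have "H (Inl ` {1,3,4}) \<le> H (Inl ` {1,4}) + H (Inl ` {3})"
    by (rule entropy_subadditive_eq) auto
  moreover have "H (Inl ` {1,2,4}) \<le> ln (card (msg_set n R 1)) + ln (card (msg_set n R 2))
      + ln (card (msg_set n R 4))"
    using entropy_messages_le[of "{1,2,4}"] by simp
  moreover have "H (Inl ` {3}) \<le> ln (card (msg_set n R 3))" "H (Inl ` {4}) \<le> ln (card (msg_set n R 4))"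
    using entropy_messages_le[of "{3}"] entropy_messages_le[of "{4}"] by simp_all
  ultimately show ?thesis
    using entropy_decode_3_first entropy_decode_2_first by linarith
qed

end

lemma instance_codeI:
  assumes "valid_encoders n R senders id (\<lambda>_. 1) f" "decoded_tuples n R senders id side_info f g \<noteq> {}"
  shows "instance_code n R f g"
proof -
  have "finite senders" by (rule finite_subset[of _ UNIV]) auto
  then show ?thesis
    using assms unfolding instance_code_def decodable_code_def id_def by blast
qed

lemma achievable_rate_bound_instance:
  assumes "achievable senders id (\<lambda>_. 1) side_info R" "0 \<le> \<alpha>" "\<And>j. \<beta> j \<le> \<alpha>"
    and "\<And>n f g. instance_code n R f g \<Longrightarrow>
           \<alpha> * ln (card (decoded_tuples n R senders (\<lambda>k. k) side_info f g))
             \<le> (\<Sum>j\<in>UNIV. \<beta> j * ln (card (msg_set n R j))) + c * (n * ln 2)"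
  shows "(\<Sum>j\<in>UNIV. (\<alpha> - \<beta> j) * R $ j) \<le> c"
  using assms(4)[OF instance_codeI]
  by (intro achievable_rate_bound[OF assms(1-3)]) (simp add: id_def mult.assoc)

lemma achievable_cut_bound_instance:
  assumes "achievable senders id (\<lambda>_. 1) side_info R" "I \<inter> J = {}" "I \<union> J = UNIV"
    and "\<And>n f g. instance_code n R f g \<Longrightarrow>
           ln (card (decoded_tuples n R senders (\<lambda>k. k) side_info f g))
             \<le> (\<Sum>j\<in>J. ln (card (msg_set n R j))) + c * (n * ln 2)"
  shows "(\<Sum>j\<in>I. R $ j) \<le> c"
proof -
  have "(\<Sum>j\<in>UNIV. (1 - of_bool (j \<in> J)) * R $ j) \<le> c"
    using assms(4) by (intro achievable_rate_bound_instance[OF assms(1)]) simp_all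
  moreover have "(1 - of_bool (j \<in> J) :: real) = of_bool (j \<in> I)" for j
    using assms(2,3) by auto
  moreover have "UNIV \<inter> {j. j \<in> I} = I" by blast
  ultimately show ?thesis by simp
qed

lemma achievable_in_rate_polytope:
  assumes ach: "achievable senders id (\<lambda>_. 1) side_info R"
  shows "R \<in> rate_polytope"
proof -
  have "(\<Sum>i\<in>{j}. R $ i) \<le> 8" for j
  proof (rule achievable_cut_bound_instance[OF ach, of "{j}" "-{j}"])
    show "ln (card (decoded_tuples n R senders (\<lambda>k. k) side_info f g))
        \<le> (\<Sum>i\<in>-{j}. ln (card (msg_set n R i))) + 8 * (n * ln 2)"
      if "instance_code n R f g" for n f g
      using that by (rule instance_code.entropy_bound_single)
  qed blast+
  moreover have "(\<Sum>j\<in>{1, 2}. R $ j) \<le> 12"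
  proof (rule achievable_cut_bound_instance[OF ach, of "{1, 2}" "{3, 4}"])
    show "ln (card (decoded_tuples n R senders (\<lambda>k. k) side_info f g))
        \<le> (\<Sum>j\<in>{3, 4}. ln (card (msg_set n R j))) + 12 * (n * ln 2)"
      if "instance_code n R f g" for n f g
      using that by (rule instance_code.entropy_bound_pair[where p=1 and q=2])
        (simp_all add: side_info_def, use UNIV_4 in blast)
  qed (use UNIV_4 in auto)
  moreover have "(\<Sum>j\<in>{1, 3}. R $ j) \<le> 12"
  proof (rule achievable_cut_bound_instance[OF ach, of "{1, 3}" "{2, 4}"])
    show "ln (card (decoded_tuples n R senders (\<lambda>k. k) side_info f g))
        \<le> (\<Sum>j\<in>{2, 4}. ln (card (msg_set n R j))) + 12 * (n * ln 2)"
      if "instance_code n R f g" for n f g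
      using that by (rule instance_code.entropy_bound_pair[where p=1 and q=3])
        (simp_all add: side_info_def, use UNIV_4 in blast)
  qed (use UNIV_4 in auto)
  moreover have "(\<Sum>j\<in>{1, 4}. R $ j) \<le> 12"
  proof (rule achievable_cut_bound_instance[OF ach, of "{1, 4}" "{2, 3}"])
    show "ln (card (decoded_tuples n R senders (\<lambda>k. k) side_info f g))
        \<le> (\<Sum>j\<in>{2, 3}. ln (card (msg_set n R j))) + 12 * (n * ln 2)"
      if "instance_code n R f g" for n f g
      using that by (rule instance_code.entropy_bound_pair[where p=4 and q=1])
        (simp_all add: side_info_def, use UNIV_4 in blast)
  qed (use UNIV_4 in auto)
  moreover have "(\<Sum>j\<in>{3, 4}. R $ j) \<le> 12"
  proof (rule achievable_cut_bound_instance[OF ach, of "{3, 4}" "{1, 2}"])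
    show "ln (card (decoded_tuples n R senders (\<lambda>k. k) side_info f g))
        \<le> (\<Sum>j\<in>{1, 2}. ln (card (msg_set n R j))) + 12 * (n * ln 2)"
      if "instance_code n R f g" for n f g
      using that by (rule instance_code.entropy_bound_pair[where p=3 and q=4])
        (simp_all add: side_info_def, use UNIV_4 in blast)
  qed (use UNIV_4 in auto)
  moreover have "R $ 1 + R $ 2 + R $ 3 \<le> 18"
    using achievable_rate_bound_instance[OF ach, of 2 "\<lambda>j. if j = 4 then 2 else 1" 18]
      instance_code.entropy_bound_triple
    by (simp add: sum_4 algebra_simps)
  moreover have "0 \<le> R $ j" for j
    using ach by (simp add: achievable_def)
  ultimately show ?thesis by (simp add: rate_polytope_def)
qed

theorem mainTheorem4:
  shows "capacity_region {S :: 4 set. S \<noteq> {}} id (\<lambda>_. 1)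
           (\<lambda>j :: 4. if j = 1 then {4} else if j = 2 then {3, 4}
                     else if j = 3 then {1, 2} else {2, 3})
         = {R :: real^4. (\<forall>j. 0 \<le> R $ j) \<and> (\<forall>j. R $ j \<le> 8) \<and>
              R $ 1 + R $ 2 \<le> 12 \<and> R $ 1 + R $ 3 \<le> 12 \<and> R $ 1 + R $ 4 \<le> 12 \<and>
              R $ 3 + R $ 4 \<le> 12 \<and> R $ 1 + R $ 2 + R $ 3 \<le> 18}"
proof -
  have "capacity_region senders id (\<lambda>_. 1) side_info = rate_polytope"
    unfolding capacity_region_def
  proof
    show "closure {R. achievable senders id (\<lambda>_. 1) side_info R} \<subseteq> rate_polytope"
      by (intro closure_minimal closed_rate_polytope) (auto intro: achievable_in_rate_polytope)
  qed (rule rate_polytope_subset_closure)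
  moreover have "(\<lambda>j :: 4. if j = 1 then {4} else if j = 2 then {3, 4}
                     else if j = 3 then {1, 2} else {2, 3}) = side_info"
    by (simp add: side_info_def fun_eq_iff)
  ultimately show ?thesis by (simp add: senders_def rate_polytope_def)
qed

end
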